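(* Let $F$ be an infinite field and $G$ a finite group with identity $e$. Let $M_n(F)$ be endowed with an elementary $G$-grading (induced by some $(g_1,\dots,g_n)\in G^n$) such that $x_e^{(1)}x_e^{(2)}-x_e^{(2)}x_e^{(1)}$ is a graded polynomial identity. If the grading is nondegenerate, then the $T_G$-ideal of graded identities of $M_n(F)$ is generated by the polynomials $x_{e}^{(1)}x_{e}^{(2)}-x_{e}^{(2)}x_{e}^{(1)}$ and $x_{g}^{(1)}x_{g^{-1}}^{(2)}x_{g}^{(3)}-x_{g}^{(3)}x_{g^{-1}}^{(2)}x_{g}^{(1)}$ for $g\neq e$ with $M_n(F)_g\neq0$. Moreover, in this case the grading is strong and $|G|=n$.
   Context: The elementary grading induced by $(g_1,\dots,g_n)$: $M_n(F)_g$ is spanned by the matrix units $e_{ij}$ with $g_i^{-1}g_j=g$. Graded identities are elements of the free associative algebra on variables $x_g^{(i)}$ of degree $g$ vanishing under all degree-respecting substitutions; $T_G$-ideals are ideals invariant under degree-preserving endomorphisms. A $G$-grading on an algebra $A$ is nondegenerate if for every $r$ and every $(h_1,\dots,h_r)\in G^r$ the monomial $x_{h_1}^{(1)}\cdots x_{h_r}^{(r)}$ is not a graded identity of $A$; it is strong if $A_gA_h=A_{gh}$ for all $g,h\in G$. *)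

theory Defs
  imports "HOL-Analysis.Finite_Cartesian_Product" "HOL-Algebra.Group"
begin

(* ---------- Graded free associative algebra ----------
   Variables are pairs (g, i) standing for x_g^{(i)} (g \<in> carrier G, i :: nat).
   A polynomial is a coefficient function on words (lists of variables)
   with finite support. *)

type_synonym ('a,'f) fpoly = "('a \<times> nat) list \<Rightarrow> 'f"

definition fsupp :: "('a,'f::zero) fpoly \<Rightarrow> ('a \<times> nat) list set" where
  "fsupp p = {w. p w \<noteq> 0}"

definition free_alg :: "'a monoid \<Rightarrow> ('a,'f::zero) fpoly set" where
  "free_alg G = {p. finite (fsupp p) \<and> (\<forall>w \<in> fsupp p. fst ` set w \<subseteq> carrier G)}"

definition fmono :: "('a \<times> nat) list \<Rightarrow> ('a,'f::zero_neq_one) fpoly" where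
  "fmono w = (\<lambda>u. if u = w then 1 else 0)"

definition fvar :: "'a \<Rightarrow> nat \<Rightarrow> ('a,'f::zero_neq_one) fpoly" where
  "fvar g i = fmono [(g, i)]"

definition fadd :: "('a,'f::plus) fpoly \<Rightarrow> ('a,'f) fpoly \<Rightarrow> ('a,'f) fpoly" where
  "fadd p q = (\<lambda>w. p w + q w)"

definition fsub :: "('a,'f::minus) fpoly \<Rightarrow> ('a,'f) fpoly \<Rightarrow> ('a,'f) fpoly" where
  "fsub p q = (\<lambda>w. p w - q w)"

definition fsmult :: "'f::times \<Rightarrow> ('a,'f) fpoly \<Rightarrow> ('a,'f) fpoly" where
  "fsmult c p = (\<lambda>w. c * p w)"

definition fmul :: "('a,'f::semiring_0) fpoly \<Rightarrow> ('a,'f) fpoly \<Rightarrow> ('a,'f) fpoly" where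
  "fmul p q = (\<lambda>w. \<Sum>k\<le>length w. p (take k w) * q (drop k w))"

fun fword_subst :: "(('a \<times> nat) \<Rightarrow> ('a,'f::semiring_1) fpoly) \<Rightarrow> ('a \<times> nat) list \<Rightarrow> ('a,'f) fpoly" where
  "fword_subst \<sigma> [] = fmono []"
| "fword_subst \<sigma> (x # xs) = fmul (\<sigma> x) (fword_subst \<sigma> xs)"

definition fsubst :: "(('a \<times> nat) \<Rightarrow> ('a,'f::semiring_1) fpoly) \<Rightarrow> ('a,'f) fpoly \<Rightarrow> ('a,'f) fpoly" where
  "fsubst \<sigma> p = (\<lambda>u. \<Sum>w\<in>fsupp p. p w * fword_subst \<sigma> w u)"

fun wdeg :: "'a monoid \<Rightarrow> ('a \<times> nat) list \<Rightarrow> 'a" where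
  "wdeg G [] = \<one>\<^bsub>G\<^esub>"
| "wdeg G (x # xs) = fst x \<otimes>\<^bsub>G\<^esub> wdeg G xs"

definition homogeneous :: "'a monoid \<Rightarrow> 'a \<Rightarrow> ('a,'f::zero) fpoly \<Rightarrow> bool" where
  "homogeneous G g p \<longleftrightarrow> (\<forall>w \<in> fsupp p. wdeg G w = g)"

definition graded_endo :: "'a monoid \<Rightarrow> (('a \<times> nat) \<Rightarrow> ('a,'f::zero) fpoly) \<Rightarrow> bool" where
  "graded_endo G \<sigma> \<longleftrightarrow> (\<forall>g \<in> carrier G. \<forall>i. \<sigma> (g, i) \<in> free_alg G \<and> homogeneous G g (\<sigma> (g, i)))"

inductive_set TG_ideal_gen :: "'a monoid \<Rightarrow> ('a,'f::comm_ring_1) fpoly set \<Rightarrow> ('a,'f) fpoly set"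
  for G S where
  gen: "s \<in> S \<Longrightarrow> s \<in> TG_ideal_gen G S"
| zero: "(\<lambda>_. 0) \<in> TG_ideal_gen G S"
| add: "p \<in> TG_ideal_gen G S \<Longrightarrow> q \<in> TG_ideal_gen G S \<Longrightarrow> fadd p q \<in> TG_ideal_gen G S"
| smult: "p \<in> TG_ideal_gen G S \<Longrightarrow> fsmult c p \<in> TG_ideal_gen G S"
| lmul: "q \<in> free_alg G \<Longrightarrow> p \<in> TG_ideal_gen G S \<Longrightarrow> fmul q p \<in> TG_ideal_gen G S"
| rmul: "q \<in> free_alg G \<Longrightarrow> p \<in> TG_ideal_gen G S \<Longrightarrow> fmul p q \<in> TG_ideal_gen G S"
| endo: "graded_endo G \<sigma> \<Longrightarrow> p \<in> TG_ideal_gen G S \<Longrightarrow> fsubst \<sigma> p \<in> TG_ideal_gen G S"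

definition elem_comp :: "'a monoid \<Rightarrow> ('n \<Rightarrow> 'a) \<Rightarrow> 'a \<Rightarrow> ('f::zero^'n^'n) set" where
  "elem_comp G gs h = {A. \<forall>i j. A $ i $ j \<noteq> 0 \<longrightarrow> inv\<^bsub>G\<^esub> (gs i) \<otimes>\<^bsub>G\<^esub> gs j = h}"

definition msmult :: "'f::times \<Rightarrow> 'f^'n^'n \<Rightarrow> 'f^'n^'n" where
  "msmult c A = (\<chi> i j. c * A $ i $ j)"

fun mword :: "(('a \<times> nat) \<Rightarrow> 'f::semiring_1^'n^'n) \<Rightarrow> ('a \<times> nat) list \<Rightarrow> 'f^'n^'n" where
  "mword \<phi> [] = mat 1"
| "mword \<phi> (x # xs) = \<phi> x ** mword \<phi> xs"

definition meval :: "(('a \<times> nat) \<Rightarrow> 'f::semiring_1^'n^'n) \<Rightarrow> ('a,'f) fpoly \<Rightarrow> 'f^'n^'n" where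
  "meval \<phi> p = (\<Sum>w\<in>fsupp p. msmult (p w) (mword \<phi> w))"

definition graded_assign :: "'a monoid \<Rightarrow> ('n \<Rightarrow> 'a) \<Rightarrow> (('a \<times> nat) \<Rightarrow> 'f::semiring_1^'n^'n) \<Rightarrow> bool" where
  "graded_assign G gs \<phi> \<longleftrightarrow> (\<forall>g \<in> carrier G. \<forall>i. \<phi> (g, i) \<in> elem_comp G gs g)"

definition graded_identity :: "'a monoid \<Rightarrow> ('n::finite \<Rightarrow> 'a) \<Rightarrow> ('a,'f::comm_ring_1) fpoly \<Rightarrow> bool" where
  "graded_identity G gs p \<longleftrightarrow> p \<in> free_alg G \<and>
     (\<forall>\<phi> :: ('a \<times> nat) \<Rightarrow> 'f^'n^'n. graded_assign G gs \<phi> \<longrightarrow> meval \<phi> p = 0)"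

definition nondegenerate :: "'a monoid \<Rightarrow> ('n::finite \<Rightarrow> 'a) \<Rightarrow> 'f::comm_ring_1 itself \<Rightarrow> bool" where
  "nondegenerate G gs TYPE_F \<longleftrightarrow>
     (\<forall>hs. set hs \<subseteq> carrier G \<longrightarrow>
        \<not> graded_identity G gs (fmono (zip hs [1..<Suc (length hs)]) :: ('a,'f) fpoly))"

definition prod_span :: "('f::comm_ring_1^'n^'n) set \<Rightarrow> ('f^'n^'n) set \<Rightarrow> ('f^'n^'n) set" where
  "prod_span U V = {\<Sum>k<m. msmult (c k) (A k ** B k) | (m::nat) c A B. \<forall>k<m. A k \<in> U \<and> B k \<in> V}"

definition strong_grading :: "'a monoid \<Rightarrow> ('n::finite \<Rightarrow> 'a) \<Rightarrow> 'f::comm_ring_1 itself \<Rightarrow> bool" where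
  "strong_grading G gs TYPE_F \<longleftrightarrow>
     (\<forall>g \<in> carrier G. \<forall>h \<in> carrier G.
        prod_span (elem_comp G gs g) (elem_comp G gs h) = (elem_comp G gs (g \<otimes>\<^bsub>G\<^esub> h) :: ('f^'n^'n) set))"

definition comm_e :: "'a monoid \<Rightarrow> ('a,'f::comm_ring_1) fpoly" where
  "comm_e G = fsub (fmul (fvar \<one>\<^bsub>G\<^esub> 1) (fvar \<one>\<^bsub>G\<^esub> 2)) (fmul (fvar \<one>\<^bsub>G\<^esub> 2) (fvar \<one>\<^bsub>G\<^esub> 1))"

definition gen_g :: "'a monoid \<Rightarrow> 'a \<Rightarrow> ('a,'f::comm_ring_1) fpoly" where
  "gen_g G g = fsub (fmul (fvar g 1) (fmul (fvar (inv\<^bsub>G\<^esub> g) 2) (fvar g 3)))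
                    (fmul (fvar g 3) (fmul (fvar (inv\<^bsub>G\<^esub> g) 2) (fvar g 1)))"

end

theory Submission
  imports Defs "HOL-Library.Multiset" "HOL-Computational_Algebra.Polynomial"
begin

text \<open>Commutativity of the variables of degree \<open>e\<close> forces the \<open>g\<^sub>i\<close> to be pairwise distinct, and
  nondegeneracy forces every group element to be some \<open>g\<^sub>i\<close> (otherwise a monomial whose partial
  degrees sweep past a missing element vanishes). So \<open>i \<mapsto> g\<^sub>i\<close> is a bijection onto \<open>G\<close>: hence
  \<open>|G| = n\<close>, the grading is strong, and a matrix of degree \<open>g\<close> has one admissible entry per row.

  Evaluated at generic homogeneous matrices, a word in graded variables has as entries monomials
  in independent indeterminates indexed by the edges of the walk it traces in the Cayley graph of
  \<open>G\<close>. As \<open>F\<close> is infinite, the coefficients of a graded identity therefore sum to zero over each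
  class of words with the same multiset of edges. Conversely, the generators allow one to swap
  two closed subwalks and to rotate three consecutive subwalks of degrees \<open>g, g\<^sup>-\<^sup>1, g\<close>; these
  moves connect any two words with the same edge multiset, so every identity is a combination of
  differences of words that are congruent modulo the generated \<open>T\<^sub>G\<close>-ideal.\<close>

section \<open>Words and the free algebra\<close>

definition gword :: "'a monoid \<Rightarrow> ('a \<times> nat) list \<Rightarrow> bool" where
  "gword G w \<longleftrightarrow> fst ` set w \<subseteq> carrier G"

lemma gword_simps [simp]:
  "gword G []"
  "gword G (x # xs) \<longleftrightarrow> fst x \<in> carrier G \<and> gword G xs"
  "gword G (u @ v) \<longleftrightarrow> gword G u \<and> gword G v"
  by (auto simp: gword_def)

lemma gword_take: "gword G w \<Longrightarrow> gword G (take j w)"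
  unfolding gword_def by (meson dual_order.trans image_mono set_take_subset)

lemma free_alg_iff: "p \<in> free_alg G \<longleftrightarrow> finite (fsupp p) \<and> (\<forall>w\<in>fsupp p. gword G w)"
  by (auto simp: free_alg_def gword_def)

lemma free_alg_finite: "p \<in> free_alg G \<Longrightarrow> finite (fsupp p)"
  by (simp add: free_alg_iff)

lemma fsupp_fmono [simp]: "fsupp (fmono w :: ('a,'f::zero_neq_one) fpoly) = {w}"
  by (auto simp: fsupp_def fmono_def)

lemma fmono_in_free_alg: "gword G w \<Longrightarrow> (fmono w :: ('a,'f::zero_neq_one) fpoly) \<in> free_alg G"
  by (simp add: free_alg_iff)

lemma fmul_fmono_left:
  "fmul (fmono u :: ('a,'f::semiring_1) fpoly) q =
     (\<lambda>w. if take (length u) w = u then q (drop (length u) w) else 0)"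
proof
  fix w :: "('a \<times> nat) list"
  have "fmul (fmono u) q w =
      (\<Sum>k\<le>length w. if k = length u \<and> take (length u) w = u then q (drop (length u) w) else 0)"
    unfolding fmul_def by (intro sum.cong) (auto simp: fmono_def)
  also have "\<dots> = (if take (length u) w = u then q (drop (length u) w) else 0)"
    by (cases "length u \<le> length w") (auto simp: sum.delta dest: arg_cong[of _ _ length])
  finally show "fmul (fmono u) q w = (if take (length u) w = u then q (drop (length u) w) else 0)" .
qed

lemma fmul_fmono: "fmul (fmono u) (fmono v) = (fmono (u @ v) :: ('a,'f::semiring_1) fpoly)"
proof
  fix w :: "('a \<times> nat) list"
  have "(take (length u) w = u \<and> drop (length u) w = v) \<longleftrightarrow> w = u @ v"
    using append_eq_conv_conj[of u v w] by auto
  then show "fmul (fmono u) (fmono v) w = (fmono (u @ v) w :: 'f)"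
    unfolding fmul_fmono_left by (auto simp: fmono_def)
qed

lemma fmul_fsub_left: "fmul (fsub p q) r = fsub (fmul p r) (fmul q r :: ('a,'f::comm_ring_1) fpoly)"
  by (auto simp: fmul_def fsub_def left_diff_distrib sum_subtractf)

lemma fmul_fsub_right: "fmul r (fsub p q) = fsub (fmul r p) (fmul r q :: ('a,'f::comm_ring_1) fpoly)"
  by (auto simp: fmul_def fsub_def right_diff_distrib sum_subtractf)

lemma fsupp_fmul: "fsupp (fmul p q) \<subseteq> (\<lambda>(u, v). u @ v) ` (fsupp p \<times> fsupp q)"
proof
  fix w assume "w \<in> fsupp (fmul p q)"
  then obtain k where "p (take k w) * q (drop k w) \<noteq> 0"
    using sum.not_neutral_contains_not_neutral by (fastforce simp: fsupp_def fmul_def)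
  then have "take k w \<in> fsupp p" "drop k w \<in> fsupp q" by (auto simp: fsupp_def)
  then show "w \<in> (\<lambda>(u, v). u @ v) ` (fsupp p \<times> fsupp q)"
    by (intro image_eqI[of _ _ "(take k w, drop k w)"]) auto
qed

lemma finite_fsupp_fmul: "finite (fsupp p) \<Longrightarrow> finite (fsupp q) \<Longrightarrow> finite (fsupp (fmul p q))"
  by (rule finite_subset[OF fsupp_fmul]) simp

lemma fsupp_fsmult: "fsupp (fsmult c p :: ('a,'f::mult_zero) fpoly) \<subseteq> fsupp p"
  by (auto simp: fsupp_def fsmult_def)

lemma finite_fsupp_fsmult: "finite (fsupp p) \<Longrightarrow> finite (fsupp (fsmult c p :: ('a,'f::mult_zero) fpoly))"
  using fsupp_fsmult finite_subset by blast

lemma fsupp_sum: "fsupp (\<lambda>w. \<Sum>i\<in>I. f i w) \<subseteq> (\<Union>i\<in>I. fsupp (f i))"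
  using sum.not_neutral_contains_not_neutral by (fastforce simp: fsupp_def)

lemma finite_fsupp_sum:
  "finite I \<Longrightarrow> (\<And>i. i \<in> I \<Longrightarrow> finite (fsupp (f i))) \<Longrightarrow> finite (fsupp (\<lambda>w. \<Sum>i\<in>I. f i w))"
  by (rule finite_subset[OF fsupp_sum]) auto

lemma fsum_insert:
  "i \<notin> I \<Longrightarrow> finite I \<Longrightarrow> (\<lambda>w. \<Sum>j\<in>insert i I. f j w) = fadd (f i) (\<lambda>w. \<Sum>j\<in>I. f j w)"
  by (simp add: fadd_def)

lemma fsubst_as_sum: "fsubst \<sigma> p = (\<lambda>u. \<Sum>w\<in>fsupp p. fsmult (p w) (fword_subst \<sigma> w) u)"
  by (simp add: fsubst_def fsmult_def)

lemma fsubst_binomial: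
  "fsubst \<sigma> (fsub (fmono u) (fmono v) :: ('a,'f::comm_ring_1) fpoly) =
     fsub (fword_subst \<sigma> u) (fword_subst \<sigma> v)"
proof (cases "u = v")
  case True
  then show ?thesis by (simp add: fsubst_def fsub_def fsupp_def)
next
  case False
  then have "fsupp (fsub (fmono u) (fmono v) :: ('a,'f) fpoly) = {u, v}"
    by (auto simp: fsupp_def fsub_def fmono_def)
  then show ?thesis unfolding fsubst_def using False by (auto simp: fsub_def fmono_def)
qed

lemma fword_subst_words:
  "(\<And>x. x \<in> set w \<Longrightarrow> \<sigma> x = fmono (\<tau> x)) \<Longrightarrow>
   fword_subst \<sigma> w = (fmono (concat (map \<tau> w)) :: ('a,'f::comm_ring_1) fpoly)"
  by (induction w) (auto simp: fmul_fmono)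

lemma comm_e_binomial:
  "comm_e G = (fsub (fmono [(\<one>\<^bsub>G\<^esub>,1),(\<one>\<^bsub>G\<^esub>,2)]) (fmono [(\<one>\<^bsub>G\<^esub>,2),(\<one>\<^bsub>G\<^esub>,1)])
     :: ('a,'f::comm_ring_1) fpoly)"
  by (simp add: comm_e_def fvar_def fmul_fmono)

lemma gen_g_binomial:
  "gen_g G g = (fsub (fmono [(g,1),(inv\<^bsub>G\<^esub> g,2),(g,3)]) (fmono [(g,3),(inv\<^bsub>G\<^esub> g,2),(g,1)])
     :: ('a,'f::comm_ring_1) fpoly)"
  by (simp add: gen_g_def fvar_def fmul_fmono)

lemma free_alg_zero: "(\<lambda>_. 0) \<in> free_alg G"
  by (simp add: free_alg_iff fsupp_def)

lemma free_alg_fadd: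
  assumes "p \<in> free_alg G" "q \<in> free_alg G"
  shows "fadd p (q :: ('a,'f::monoid_add) fpoly) \<in> free_alg G"
proof -
  have "fsupp (fadd p q) \<subseteq> fsupp p \<union> fsupp q"
    by (auto simp: fsupp_def fadd_def)
  then show ?thesis
    using assms unfolding free_alg_iff by (meson UnE finite_UnI rev_finite_subset subsetD)
qed

lemma free_alg_fsmult: "p \<in> free_alg G \<Longrightarrow> fsmult c (p :: ('a,'f::mult_zero) fpoly) \<in> free_alg G"
  using fsupp_fsmult[of c p] by (auto simp: free_alg_iff intro: finite_fsupp_fsmult)

lemma free_alg_fmul: "p \<in> free_alg G \<Longrightarrow> q \<in> free_alg G \<Longrightarrow> fmul p q \<in> free_alg G"
  unfolding free_alg_iff using fsupp_fmul[of p q] by (auto intro: finite_fsupp_fmul)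

lemma free_alg_fsub_fmono:
  assumes "gword G u" "gword G v"
  shows "(fsub (fmono u) (fmono v) :: ('a,'f::comm_ring_1) fpoly) \<in> free_alg G"
proof -
  have "fsupp (fsub (fmono u) (fmono v) :: ('a,'f) fpoly) \<subseteq> {u, v}"
    by (auto simp: fsupp_def fsub_def fmono_def)
  then show ?thesis
    using assms unfolding free_alg_iff using finite_subset by auto
qed

lemma free_alg_fword_subst:
  "(\<And>x. x \<in> set w \<Longrightarrow> \<sigma> x \<in> free_alg G) \<Longrightarrow>
   (fword_subst \<sigma> w :: ('a,'f::comm_ring_1) fpoly) \<in> free_alg G"
  by (induction w) (auto intro: free_alg_fmul fmono_in_free_alg)

lemma free_alg_fsubst:
  assumes p: "p \<in> free_alg G" and \<sigma>: "\<And>x. fst x \<in> carrier G \<Longrightarrow> \<sigma> x \<in> free_alg G"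
  shows "fsubst \<sigma> (p :: ('a,'f::comm_ring_1) fpoly) \<in> free_alg G"
proof -
  have words: "fword_subst \<sigma> w \<in> free_alg G" if "w \<in> fsupp p" for w
    using p that by (intro free_alg_fword_subst \<sigma>) (auto simp: free_alg_iff gword_def)
  have "fsupp (fsubst \<sigma> p) \<subseteq> (\<Union>w\<in>fsupp p. fsupp (fsmult (p w) (fword_subst \<sigma> w)))"
    unfolding fsubst_as_sum by (rule fsupp_sum)
  also have "\<dots> \<subseteq> (\<Union>w\<in>fsupp p. fsupp (fword_subst \<sigma> w))"
    using fsupp_fsmult by blast
  finally have "fsupp (fsubst \<sigma> p) \<subseteq> (\<Union>w\<in>fsupp p. fsupp (fword_subst \<sigma> w))" .
  moreover have "finite (\<Union>w\<in>fsupp p. fsupp (fword_subst \<sigma> w))"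
    using p words by (auto simp: free_alg_iff)
  ultimately show ?thesis
    using words by (auto simp: free_alg_iff intro: finite_subset)
qed

section \<open>Congruence of words modulo a \<open>T\<^sub>G\<close>-ideal\<close>

lemma TG_ideal_gen_sum:
  "finite I \<Longrightarrow> (\<And>i. i \<in> I \<Longrightarrow> f i \<in> TG_ideal_gen G S) \<Longrightarrow>
   (\<lambda>u. \<Sum>i\<in>I. f i u) \<in> TG_ideal_gen G (S :: ('a,'f::comm_ring_1) fpoly set)"
proof (induction I rule: finite_induct)
  case empty
  then show ?case by (simp add: TG_ideal_gen.zero)
next
  case (insert i I)
  then show ?case unfolding fsum_insert[OF insert(2,1)] by (simp add: TG_ideal_gen.add)
qed

definition word_congruent ::
    "'a monoid \<Rightarrow> ('a,'f::comm_ring_1) fpoly set \<Rightarrow> ('a \<times> nat) list \<Rightarrow> ('a \<times> nat) list \<Rightarrow> bool" where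
  "word_congruent G S u v \<longleftrightarrow> fsub (fmono u) (fmono v) \<in> TG_ideal_gen G S"

lemma word_congruent_refl:
  fixes S :: "('a,'f::comm_ring_1) fpoly set"
  shows "word_congruent G S w w"
proof -
  have "fsub (fmono w) (fmono w) = (\<lambda>_. 0 :: 'f)" by (auto simp: fsub_def)
  then show ?thesis unfolding word_congruent_def by (simp add: TG_ideal_gen.zero)
qed

lemma word_congruent_sym:
  fixes S :: "('a,'f::comm_ring_1) fpoly set"
  assumes "word_congruent G S u v"
  shows "word_congruent G S v u"
proof -
  have "fsub (fmono v) (fmono u) = fsmult (-1) (fsub (fmono u) (fmono v) :: ('a,'f) fpoly)"
    by (auto simp: fsub_def fsmult_def)
  then show ?thesis using assms unfolding word_congruent_def by (simp add: TG_ideal_gen.smult)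
qed

lemma word_congruent_trans:
  fixes S :: "('a,'f::comm_ring_1) fpoly set"
  assumes "word_congruent G S u v" "word_congruent G S v w"
  shows "word_congruent G S u w"
proof -
  have "fsub (fmono u) (fmono w) =
      fadd (fsub (fmono u) (fmono v)) (fsub (fmono v) (fmono w) :: ('a,'f) fpoly)"
    by (auto simp: fsub_def fadd_def)
  then show ?thesis using assms unfolding word_congruent_def by (simp add: TG_ideal_gen.add)
qed

lemma word_congruent_context:
  assumes "gword G u" "gword G v" "word_congruent G S w w'"
  shows "word_congruent G S (u @ w @ v) (u @ w' @ v)"
proof -
  have "fmul (fmono u) (fmul (fsub (fmono w) (fmono w')) (fmono v)) \<in> TG_ideal_gen G S"
    using assms unfolding word_congruent_def
    by (intro TG_ideal_gen.lmul TG_ideal_gen.rmul fmono_in_free_alg)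
  then show ?thesis
    unfolding word_congruent_def by (simp add: fmul_fsub_left fmul_fsub_right fmul_fmono)
qed

lemma word_congruent_subst:
  fixes S :: "('a,'f::comm_ring_1) fpoly set"
  assumes G: "group G" and gen: "fsub (fmono u) (fmono v) \<in> S"
    and \<tau>: "\<And>x. fst x \<in> carrier G \<Longrightarrow> gword G (\<tau> x) \<and> wdeg G (\<tau> x) = fst x"
  shows "word_congruent G S (concat (map \<tau> u)) (concat (map \<tau> v))"
proof -
  define \<sigma> where "\<sigma> x = (fmono (\<tau> x) :: ('a,'f) fpoly)" for x
  have "graded_endo G \<sigma>"
    using \<tau> by (auto simp: graded_endo_def \<sigma>_def homogeneous_def intro: fmono_in_free_alg)
  then have "fsubst \<sigma> (fsub (fmono u) (fmono v)) \<in> TG_ideal_gen G S"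
    by (intro TG_ideal_gen.endo TG_ideal_gen.gen gen)
  then show ?thesis
    unfolding word_congruent_def fsubst_binomial by (simp add: fword_subst_words \<sigma>_def)
qed

lemma word_congruent_comm_e:
  assumes G: "group G" and "comm_e G \<in> S"
    and "gword G s" "wdeg G s = \<one>\<^bsub>G\<^esub>" "gword G t" "wdeg G t = \<one>\<^bsub>G\<^esub>"
  shows "word_congruent G S (s @ t) (t @ s)"
proof -
  define \<tau> where "\<tau> x = (if x = (\<one>\<^bsub>G\<^esub>, 1::nat) then s else if x = (\<one>\<^bsub>G\<^esub>, 2) then t else [x])" for x
  have "word_congruent G S (concat (map \<tau> [(\<one>\<^bsub>G\<^esub>,1),(\<one>\<^bsub>G\<^esub>,2)])) (concat (map \<tau> [(\<one>\<^bsub>G\<^esub>,2),(\<one>\<^bsub>G\<^esub>,1)]))"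
    using assms by (intro word_congruent_subst) (auto simp: \<tau>_def comm_e_binomial group.is_monoid)
  then show ?thesis by (simp add: \<tau>_def)
qed

lemma word_congruent_gen_g:
  assumes G: "group G" and "gen_g G g \<in> S"
    and "gword G s" "wdeg G s = g" "gword G z" "wdeg G z = inv\<^bsub>G\<^esub> g" "gword G t" "wdeg G t = g"
  shows "word_congruent G S (s @ z @ t) (t @ z @ s)"
proof -
  define \<tau> where "\<tau> x = (if x = (g, 1::nat) then s else if x = (inv\<^bsub>G\<^esub> g, 2) then z
     else if x = (g, 3) then t else [x])" for x
  have "word_congruent G S (concat (map \<tau> [(g,1),(inv\<^bsub>G\<^esub> g,2),(g,3)]))
      (concat (map \<tau> [(g,3),(inv\<^bsub>G\<^esub> g,2),(g,1)]))"
    using assms by (intro word_congruent_subst) (auto simp: \<tau>_def gen_g_binomial group.is_monoid)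
  then show ?thesis by (simp add: \<tau>_def)
qed

section \<open>Walks in the Cayley graph\<close>

text \<open>Reading a word letter by letter from a vertex \<open>a\<close> of the Cayley graph of \<open>G\<close> traces a
  walk; \<open>walk_mset G a w\<close> is the multiset of its edges, each recorded as the letter read
  together with the vertex it is read at.\<close>

fun walk_mset :: "'a monoid \<Rightarrow> 'a \<Rightarrow> ('a \<times> nat) list \<Rightarrow> (('a \<times> nat) \<times> 'a) multiset" where
  "walk_mset G a [] = {#}"
| "walk_mset G a (x # xs) = add_mset (x, a) (walk_mset G (a \<otimes>\<^bsub>G\<^esub> fst x) xs)"

text \<open>The group locale restricted to the record type \<open>'a monoid\<close>, on which \<open>wdeg\<close> is defined.\<close>

locale word_group = group G for G :: "'a monoid" (structure)

context word_group
begin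

lemma m_inv_cancel_left [simp]: "x \<in> carrier G \<Longrightarrow> y \<in> carrier G \<Longrightarrow> x \<otimes> (inv x \<otimes> y) = y"
  by (simp add: m_assoc[symmetric])

lemma inv_m_cancel_left [simp]: "x \<in> carrier G \<Longrightarrow> y \<in> carrier G \<Longrightarrow> inv x \<otimes> (x \<otimes> y) = y"
  by (simp add: m_assoc[symmetric])

lemma wdeg_closed: "gword G w \<Longrightarrow> wdeg G w \<in> carrier G"
  by (induction w) auto

lemma wdeg_append: "gword G u \<Longrightarrow> gword G v \<Longrightarrow> wdeg G (u @ v) = wdeg G u \<otimes> wdeg G v"
  by (induction u) (auto simp: m_assoc wdeg_closed)

lemma walk_mset_append:
  "a \<in> carrier G \<Longrightarrow> gword G u \<Longrightarrow>
   walk_mset G a (u @ v) = walk_mset G a u + walk_mset G (a \<otimes> wdeg G u) v"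
  by (induction u arbitrary: a) (auto simp: m_assoc wdeg_closed)

lemma walk_mset_split:
  "a \<in> carrier G \<Longrightarrow> gword G w \<Longrightarrow> (x, v) \<in># walk_mset G a w \<Longrightarrow>
   \<exists>C B. w = C @ x # B \<and> a \<otimes> wdeg G C = v"
proof (induction w arbitrary: a)
  case Nil
  then show ?case by simp
next
  case (Cons y w)
  show ?case
  proof (cases "(x, v) = (y, a)")
    case True
    then show ?thesis using Cons.prems by (intro exI[of _ "[]"] exI[of _ w]) auto
  next
    case False
    then have "(x, v) \<in># walk_mset G (a \<otimes> fst y) w" using Cons.prems by auto
    then obtain C B where "w = C @ x # B" "(a \<otimes> fst y) \<otimes> wdeg G C = v"
      using Cons.IH[of "a \<otimes> fst y"] Cons.prems by auto
    then show ?thesis using Cons.prems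
      by (intro exI[of _ "y # C"] exI[of _ B]) (auto simp: m_assoc wdeg_closed)
  qed
qed

lemma walk_mset_rotate:
  assumes a: "a \<in> carrier G" and g: "g \<in> carrier G"
    and s: "gword G s" "wdeg G s = g" and z: "gword G z" "wdeg G z = inv g"
    and t: "gword G t" "wdeg G t = g"
  shows "walk_mset G a (s @ z @ t @ r) = walk_mset G a (t @ z @ s @ r)"
proof -
  have "a \<otimes> g \<otimes> inv g = a" using a g by (simp add: m_assoc)
  moreover have "walk_mset G a (u @ z @ u' @ r) =
      walk_mset G a u + walk_mset G (a \<otimes> g) z + walk_mset G (a \<otimes> g \<otimes> inv g) u'
        + walk_mset G (a \<otimes> g \<otimes> inv g \<otimes> g) r"
    if "gword G u" "wdeg G u = g" "gword G u'" "wdeg G u' = g" for u u'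
    using that a g z by (simp add: walk_mset_append add.assoc)
  ultimately show ?thesis using s t by (simp add: ac_simps)
qed

lemma walk_end_in:
  assumes "v0 \<in> W" "v0 \<in> carrier G" "gword G P"
    and "\<And>l v. (l, v) \<in># walk_mset G v0 P \<Longrightarrow> v \<in> W \<Longrightarrow> v \<otimes> fst l \<in> W"
  shows "v0 \<otimes> wdeg G P \<in> W"
  using assms
proof (induction P arbitrary: v0)
  case Nil
  then show ?case by simp
next
  case (Cons l P)
  then have "v0 \<otimes> fst l \<otimes> wdeg G P \<in> W" by auto
  then show ?case using Cons.prems by (simp add: m_assoc wdeg_closed)
qed

lemma loop_split_degrees:
  assumes a: "a \<in> carrier G" and x: "fst x \<in> carrier G"
    and C1: "gword G C1" and C2: "gword G C2" and B1: "gword G B1"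
    and loop: "wdeg G (C1 @ C2) = \<one>" and meet: "a \<otimes> wdeg G C1 = a \<otimes> fst x \<otimes> wdeg G B1"
  shows "wdeg G C2 = inv (wdeg G C1)" "wdeg G (x # B1) = wdeg G C1"
proof -
  have "wdeg G C1 \<otimes> wdeg G C2 = \<one>" using loop wdeg_append[OF C1 C2] by simp
  then show "wdeg G C2 = inv (wdeg G C1)"
    using wdeg_closed[OF C1] wdeg_closed[OF C2] by (metis inv_equality inv_comm)
  have "a \<otimes> wdeg G C1 = a \<otimes> wdeg G (x # B1)"
    using meet a x wdeg_closed[OF B1] by (simp add: m_assoc)
  then show "wdeg G (x # B1) = wdeg G C1"
    using a x B1 wdeg_closed[OF C1] wdeg_closed[of "x # B1"] by simp
qed

text \<open>A walk from \<open>c\<close> using exactly the edges of the closed walk \<open>C\<close> at \<open>a\<close> and of the walk \<open>B\<close>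
  from \<open>c\<close> must reach \<open>a\<close>; it cannot do so while staying on the vertices of \<open>B\<close> unless these meet \<open>C\<close>.\<close>

lemma walks_meet:
  assumes a: "a \<in> carrier G" and c: "c \<in> carrier G"
    and C: "gword G C" "C \<noteq> []" and B: "gword G B" and xs: "gword G xs"
    and edges: "walk_mset G c xs = walk_mset G a C + walk_mset G c B"
  shows "\<exists>C1 C2 B1 B2. C = C1 @ C2 \<and> B = B1 @ B2 \<and> a \<otimes> wdeg G C1 = c \<otimes> wdeg G B1"
proof -
  define W where "W = {c \<otimes> wdeg G B1 | B1 B2. B = B1 @ B2}"
  have "\<exists>l v. (l, v) \<in># walk_mset G a C \<and> v \<in> W"
  proof (rule ccontr)
    assume disjoint: "\<not> ?thesis"
    obtain y C' where "C = y # C'" using C by (cases C) auto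
    then have "(y, a) \<in># walk_mset G c xs" using edges by simp
    then obtain P Q where xs_eq: "xs = P @ y # Q" and P_end: "c \<otimes> wdeg G P = a"
      using walk_mset_split[OF c xs] by blast
    have P: "gword G P" using xs xs_eq by simp
    have "c \<otimes> wdeg G P \<in> W"
    proof (rule walk_end_in[OF _ c P])
      show "c \<in> W" unfolding W_def by (rule CollectI, rule exI[of _ "[]"], rule exI[of _ B]) (simp add: c)
      fix l v assume lv: "(l, v) \<in># walk_mset G c P" and v: "v \<in> W"
      have "walk_mset G c P \<subseteq># walk_mset G c xs"
        using walk_mset_append[OF c P] xs_eq by simp
      then have "(l, v) \<in># walk_mset G a C + walk_mset G c B"
        using lv edges by (auto dest: mset_subset_eqD)
      then have "(l, v) \<in># walk_mset G c B"
        using v disjoint by (cases l) auto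
      then obtain B1 B2 where "B = B1 @ l # B2" "c \<otimes> wdeg G B1 = v"
        using walk_mset_split[OF c B] by blast
      with B c show "v \<otimes> fst l \<in> W" unfolding W_def
        by (intro CollectI exI[of _ "B1 @ [l]"] exI[of _ B2]) (auto simp: wdeg_append wdeg_closed m_assoc)
    qed
    then have "a \<in> W" using P_end by simp
    moreover have "(y, a) \<in># walk_mset G a C" using \<open>C = y # C'\<close> by simp
    ultimately show False using disjoint by blast
  qed
  then obtain l v B1 B2 where "(l, v) \<in># walk_mset G a C" "B = B1 @ B2" "c \<otimes> wdeg G B1 = v"
    unfolding W_def by blast
  moreover obtain C1 C2 where "C = C1 @ l # C2" "a \<otimes> wdeg G C1 = v"
    using walk_mset_split[OF a C(1) calculation(1)] by blast
  ultimately show ?thesis by (metis append_Cons)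
qed

end

locale walk_congruence = word_group G for G :: "'a monoid" (structure) +
  fixes E :: "('a \<times> nat) list \<Rightarrow> ('a \<times> nat) list \<Rightarrow> bool"
  assumes E_refl: "E w w"
    and E_sym: "E u v \<Longrightarrow> E v u"
    and E_trans: "E u v \<Longrightarrow> E v w \<Longrightarrow> E u w"
    and E_context: "gword G u \<Longrightarrow> gword G v \<Longrightarrow> E w w' \<Longrightarrow> E (u @ w @ v) (u @ w' @ v)"
    and E_swap: "gword G s \<Longrightarrow> gword G t \<Longrightarrow> wdeg G s = \<one> \<Longrightarrow> wdeg G t = \<one> \<Longrightarrow> E (s @ t) (t @ s)"
    and E_rotate: "g \<in> carrier G \<Longrightarrow> g \<noteq> \<one> \<Longrightarrow> gword G s \<Longrightarrow> gword G z \<Longrightarrow> gword G t \<Longrightarrow>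
       wdeg G s = g \<Longrightarrow> wdeg G z = inv g \<Longrightarrow> wdeg G t = g \<Longrightarrow> E (s @ z @ t) (t @ z @ s)"
begin

declare E_trans [trans]

lemma E_rotate_prefix:
  assumes s: "gword G s" "wdeg G s = g" and z: "gword G z" "wdeg G z = inv g"
    and t: "gword G t" "wdeg G t = g" and r: "gword G r"
  shows "E (s @ z @ t @ r) (t @ z @ s @ r)"
proof (cases "g = \<one>")
  case True
  then have deg: "wdeg G s = \<one>" "wdeg G z = \<one>" "wdeg G t = \<one>" using s z t by auto
  have "E (s @ z @ t @ r) (z @ s @ t @ r)"
    using E_context[OF _ _ E_swap[OF s(1) z(1) deg(1,2)], of "[]" "t @ r"] t r by simp
  also have "E \<dots> (z @ t @ s @ r)"
    using E_context[OF z(1) r E_swap[OF s(1) t(1) deg(1,3)]] by simp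
  also have "E \<dots> (t @ z @ s @ r)"
    using E_context[OF _ _ E_swap[OF z(1) t(1) deg(2,3)], of "[]" "s @ r"] s r by simp
  finally show ?thesis .
next
  case False
  have "g \<in> carrier G" using s wdeg_closed by blast
  then show ?thesis
    using E_context[OF _ r E_rotate[OF _ False s(1) z(1) t(1) s(2) z(2) t(2)], of "[]"] by simp
qed

lemma move_to_front:
  assumes a: "a \<in> carrier G" and w': "gword G w'" and x: "fst x \<in> carrier G" and xs: "gword G xs"
    and eq: "walk_mset G a w' = walk_mset G a (x # xs)"
  obtains w'' where "gword G w''" "E w' (x # w'')" "walk_mset G a (x # w'') = walk_mset G a w'"
proof -
  have "(x, a) \<in># walk_mset G a w'" using eq by simp
  then obtain C B where w'_eq: "w' = C @ x # B" and "a \<otimes> wdeg G C = a"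
    using walk_mset_split[OF a w'] by blast
  moreover have C: "gword G C" and B: "gword G B" using w' w'_eq by auto
  ultimately have deg_C: "wdeg G C = \<one>" using a wdeg_closed by simp
  define c where "c = a \<otimes> fst x"
  have c: "c \<in> carrier G" using a x by (simp add: c_def)
  have edges: "walk_mset G c xs = walk_mset G a C + walk_mset G c B"
    using eq walk_mset_append[OF a C] w'_eq deg_C a by (simp add: c_def)
  show thesis
  proof (cases "C = []")
    case True
    then show thesis using that[of B] w'_eq B E_refl by simp
  next
    case False
    obtain C1 C2 B1 B2 where C_eq: "C = C1 @ C2" and B_eq: "B = B1 @ B2"
      and meet: "a \<otimes> wdeg G C1 = c \<otimes> wdeg G B1"
      using walks_meet[OF a c C False B xs edges] by blast
    have C1: "gword G C1" and C2: "gword G C2" and B1: "gword G B1" and B2: "gword G B2"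
      using C B C_eq B_eq by auto
    have "wdeg G (C1 @ C2) = \<one>" using deg_C C_eq by simp
    note degrees = loop_split_degrees[OF a x C1 C2 B1 this meet[unfolded c_def]]
    have g: "wdeg G C1 \<in> carrier G" using wdeg_closed[OF C1] .
    have xB1: "gword G (x # B1)" using x B1 by simp
    have w'_rot: "w' = C1 @ C2 @ (x # B1) @ B2" using w'_eq C_eq B_eq by simp
    show thesis
    proof (rule that[of "B1 @ C2 @ C1 @ B2"])
      show "gword G (B1 @ C2 @ C1 @ B2)" using B1 C2 C1 B2 by simp
      show "E w' (x # B1 @ C2 @ C1 @ B2)"
        using E_rotate_prefix[OF C1 refl C2 degrees(1) xB1 degrees(2) B2] w'_rot by simp
      show "walk_mset G a (x # B1 @ C2 @ C1 @ B2) = walk_mset G a w'"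
        using walk_mset_rotate[OF a g xB1 degrees(2) C2 degrees(1) C1 refl, of B2] w'_rot by simp
    qed
  qed
qed

theorem E_if_walk_mset_eq:
  "a \<in> carrier G \<Longrightarrow> gword G w \<Longrightarrow> gword G w' \<Longrightarrow> walk_mset G a w = walk_mset G a w' \<Longrightarrow> E w w'"
proof (induction w arbitrary: a w')
  case Nil
  then show ?case using E_refl by (cases w') auto
next
  case (Cons x xs)
  have x: "fst x \<in> carrier G" and xs: "gword G xs" using Cons.prems by auto
  obtain w'' where w'': "gword G w''" "E w' (x # w'')" "walk_mset G a (x # w'') = walk_mset G a w'"
    using move_to_front[OF Cons.prems(1,3) x xs] Cons.prems(4) by metis
  then have "add_mset (x, a) (walk_mset G (a \<otimes> fst x) xs) =
      add_mset (x, a) (walk_mset G (a \<otimes> fst x) w'')"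
    using Cons.prems(4) by simp
  then have "walk_mset G (a \<otimes> fst x) xs = walk_mset G (a \<otimes> fst x) w''" by simp
  then have "E xs w''" using Cons.IH[OF _ xs w''(1)] Cons.prems(1) x by blast
  then have "E (x # xs) (x # w'')" using E_context[of "[x]" "[]"] x by simp
  then show ?case using E_trans E_sym w''(2) by blast
qed

end

lemma word_congruent_if_walk_mset_eq:
  fixes S :: "('a,'f::comm_ring_1) fpoly set"
  assumes G: "group G" and comm: "comm_e G \<in> S"
    and gens: "\<And>g. g \<in> carrier G \<Longrightarrow> g \<noteq> \<one>\<^bsub>G\<^esub> \<Longrightarrow> gen_g G g \<in> S"
    and "a \<in> carrier G" "gword G w" "gword G w'" "walk_mset G a w = walk_mset G a w'"
  shows "word_congruent G S w w'"
proof -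
  interpret walk_congruence G "word_congruent G S"
  proof (rule walk_congruence.intro[OF G[folded word_group_def]], rule walk_congruence_axioms.intro)
    show "word_congruent G S (s @ t) (t @ s)"
      if "gword G s" "gword G t" "wdeg G s = \<one>\<^bsub>G\<^esub>" "wdeg G t = \<one>\<^bsub>G\<^esub>" for s t
      using word_congruent_comm_e[OF G comm] that by blast
    show "word_congruent G S (s @ z @ t) (t @ z @ s)"
      if "g \<in> carrier G" "g \<noteq> \<one>\<^bsub>G\<^esub>" "gword G s" "gword G z" "gword G t"
        "wdeg G s = g" "wdeg G z = inv\<^bsub>G\<^esub> g" "wdeg G t = g" for g s z t
      using word_congruent_gen_g[OF G gens[OF that(1,2)]] that by blast
  qed (fact word_congruent_refl word_congruent_sym word_congruent_trans word_congruent_context)+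
  show ?thesis using E_if_walk_mset_eq assms(4-7) by blast
qed

section \<open>Evaluation at matrices\<close>

lemma msmult_entry [simp]: "msmult c A $ i $ j = c * A $ i $ j"
  by (simp add: msmult_def)

lemma msmult_neg_one: "msmult (-1) A = - (A :: 'f::comm_ring_1^'n^'n)"
  by (simp add: vec_eq_iff)

lemma msmult_zero_right: "msmult c 0 = (0 :: 'f::comm_ring_1^'n^'n)"
  by (simp add: vec_eq_iff)

lemma mword_append: "mword \<phi> (u @ v) = mword \<phi> u ** mword \<phi> v"
  by (induction u) (auto simp: matrix_mul_assoc)

lemma matrix_mul_sum_right:
  fixes A :: "'f::comm_ring_1^'n::finite^'n"
  shows "A ** (\<Sum>v\<in>S. msmult (c v) (B v)) = (\<Sum>v\<in>S. msmult (c v) (A ** B v))"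
proof -
  have "(A ** (\<Sum>v\<in>S. msmult (c v) (B v))) $ i $ j = (\<Sum>k\<in>UNIV. \<Sum>v\<in>S. c v * (A$i$k * B v $k$j))"
    for i j by (simp add: matrix_matrix_mult_def sum_component sum_distrib_left mult_ac)
  moreover have "(\<Sum>k\<in>UNIV. \<Sum>v\<in>S. c v * (A$i$k * B v $k$j)) = (\<Sum>v\<in>S. msmult (c v) (A ** B v)) $ i $ j"
    for i j by (subst sum.swap) (simp add: matrix_matrix_mult_def sum_component sum_distrib_left)
  ultimately show ?thesis by (simp add: vec_eq_iff)
qed

lemma matrix_mul_sum_left:
  fixes A :: "'f::comm_ring_1^'n::finite^'n"
  shows "(\<Sum>v\<in>S. msmult (c v) (B v)) ** A = (\<Sum>v\<in>S. msmult (c v) (B v ** A))"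
proof -
  have "((\<Sum>v\<in>S. msmult (c v) (B v)) ** A) $ i $ j = (\<Sum>k\<in>UNIV. \<Sum>v\<in>S. c v * (B v $i$k * A$k$j))"
    for i j by (simp add: matrix_matrix_mult_def sum_component sum_distrib_right mult.assoc)
  moreover have "(\<Sum>k\<in>UNIV. \<Sum>v\<in>S. c v * (B v $i$k * A$k$j)) = (\<Sum>v\<in>S. msmult (c v) (B v ** A)) $ i $ j"
    for i j by (subst sum.swap) (simp add: matrix_matrix_mult_def sum_component sum_distrib_left)
  ultimately show ?thesis by (simp add: vec_eq_iff)
qed

lemma meval_superset:
  assumes "finite S" "fsupp p \<subseteq> S"
  shows "meval \<phi> p = (\<Sum>w\<in>S. msmult (p w) (mword \<phi> w))"
  unfolding meval_def
  by (rule sum.mono_neutral_left[OF assms]) (auto simp: fsupp_def vec_eq_iff)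

lemma meval_entry:
  assumes "finite S" "fsupp p \<subseteq> S"
  shows "meval \<phi> p $ i $ j = (\<Sum>w\<in>S. p w * mword \<phi> w $ i $ j)"
  by (simp add: meval_superset[OF assms] sum_component)

lemma meval_zero: "meval \<phi> (\<lambda>_. 0) = 0"
  by (simp add: meval_def fsupp_def)

lemma meval_fmono: "meval \<phi> (fmono w :: ('a,'f::comm_ring_1) fpoly) = mword \<phi> w"
  unfolding meval_def fsupp_fmono by (simp add: fmono_def vec_eq_iff)

lemma meval_fadd:
  fixes p q :: "('a,'f::comm_ring_1) fpoly"
  assumes "finite (fsupp p)" "finite (fsupp q)"
  shows "meval \<phi> (fadd p q) = meval \<phi> p + meval \<phi> q"
proof -
  let ?S = "fsupp p \<union> fsupp q"
  have S: "finite ?S" using assms by simp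
  have "fsupp (fadd p q) \<subseteq> ?S" by (auto simp: fsupp_def fadd_def)
  then show ?thesis
    by (simp add: vec_eq_iff meval_entry[OF S] fadd_def distrib_right sum.distrib)
qed

lemma meval_fsmult:
  fixes p :: "('a,'f::comm_ring_1) fpoly"
  assumes "finite (fsupp p)"
  shows "meval \<phi> (fsmult c p) = msmult c (meval \<phi> p)"
  using fsupp_fsmult[of c p]
  by (simp add: vec_eq_iff meval_entry[OF assms] fsmult_def sum_distrib_left mult.assoc)

lemma meval_fsub:
  fixes p q :: "('a,'f::comm_ring_1) fpoly"
  assumes "finite (fsupp p)" "finite (fsupp q)"
  shows "meval \<phi> (fsub p q) = meval \<phi> p - meval \<phi> q"
proof -
  have "fsub p q = fadd p (fsmult (-1) q)" by (auto simp: fsub_def fadd_def fsmult_def)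
  then show ?thesis
    using assms by (simp add: meval_fadd meval_fsmult finite_fsupp_fsmult msmult_neg_one)
qed

lemma meval_sum:
  fixes \<phi> :: "('a \<times> nat) \<Rightarrow> 'f::comm_ring_1^'n::finite^'n"
  assumes "finite I" "\<And>i. i \<in> I \<Longrightarrow> finite (fsupp (f i))"
  shows "meval \<phi> (\<lambda>w. \<Sum>i\<in>I. f i w) = (\<Sum>i\<in>I. meval \<phi> (f i))"
  using assms
proof (induction I rule: finite_induct)
  case empty
  then show ?case using meval_zero by simp
next
  case (insert i I)
  then show ?case unfolding fsum_insert[OF insert(2,1)] by (simp add: meval_fadd finite_fsupp_sum)
qed

lemma meval_fmul_fmono:
  fixes \<phi> :: "('a \<times> nat) \<Rightarrow> 'f::comm_ring_1^'n::finite^'n"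
  assumes q: "finite (fsupp q)"
  shows "meval \<phi> (fmul (fmono u) q) = mword \<phi> u ** meval \<phi> q"
proof -
  have "fsupp (fmul (fmono u) q) \<subseteq> (\<lambda>v. u @ v) ` fsupp q"
  proof
    fix w assume "w \<in> fsupp (fmul (fmono u) q)"
    then have "take (length u) w = u" "drop (length u) w \<in> fsupp q"
      by (auto simp: fsupp_def fmul_fmono_left split: if_splits)
    then show "w \<in> (\<lambda>v. u @ v) ` fsupp q"
      by (intro image_eqI[of _ _ "drop (length u) w"]) (metis append_take_drop_id)
  qed
  then have "meval \<phi> (fmul (fmono u) q) =
      (\<Sum>w\<in>(\<lambda>v. u @ v) ` fsupp q. msmult (fmul (fmono u) q w) (mword \<phi> w))"
    by (rule meval_superset[rotated]) (simp add: q)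
  also have "\<dots> = (\<Sum>v\<in>fsupp q. msmult (q v) (mword \<phi> u ** mword \<phi> v))"
    by (subst sum.reindex) (auto simp: inj_on_def fmul_fmono_left mword_append)
  also have "\<dots> = mword \<phi> u ** meval \<phi> q"
    by (simp add: matrix_mul_sum_right meval_def)
  finally show ?thesis .
qed

lemma fmul_as_sum:
  fixes p :: "('a,'f::comm_ring_1) fpoly"
  assumes p: "finite (fsupp p)"
  shows "fmul p q = (\<lambda>w. \<Sum>u\<in>fsupp p. fsmult (p u) (fmul (fmono u) q) w)"
proof
  fix w :: "('a \<times> nat) list"
  define prefixes where "prefixes = (\<lambda>k. take k w) ` {..length w}"
  define f where "f u = p u * q (drop (length u) w)" for u
  have prefix_iff: "u \<in> prefixes \<longleftrightarrow> take (length u) w = u" for u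
  proof
    assume "u \<in> prefixes"
    then show "take (length u) w = u" unfolding prefixes_def by (auto simp: min_def)
  next
    assume u: "take (length u) w = u"
    then have "length u \<le> length w" by (metis length_take min.cobounded1)
    with u show "u \<in> prefixes" unfolding prefixes_def by (intro image_eqI[of _ _ "length u"]) auto
  qed
  have "inj_on (\<lambda>k. take k w) {..length w}"
    by (rule inj_onI) (metis atMost_iff length_take min.absorb2)
  then have "fmul p q w = (\<Sum>u\<in>prefixes. f u)"
    unfolding prefixes_def fmul_def f_def by (subst sum.reindex) (auto intro: sum.cong)
  also have "\<dots> = (\<Sum>u\<in>prefixes \<inter> fsupp p. f u)"
    by (rule sum.mono_neutral_right) (auto simp: prefixes_def f_def fsupp_def)
  also have "\<dots> = (\<Sum>u\<in>fsupp p. if u \<in> prefixes then f u else 0)"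
    by (subst Int_commute) (rule sum.inter_restrict[OF p])
  also have "\<dots> = (\<Sum>u\<in>fsupp p. fsmult (p u) (fmul (fmono u) q) w)"
    by (intro sum.cong) (simp_all add: prefix_iff fsmult_def fmul_fmono_left f_def)
  finally show "fmul p q w = (\<Sum>u\<in>fsupp p. fsmult (p u) (fmul (fmono u) q) w)" .
qed

lemma meval_fmul:
  fixes \<phi> :: "('a \<times> nat) \<Rightarrow> 'f::comm_ring_1^'n::finite^'n"
  assumes p: "finite (fsupp p)" and q: "finite (fsupp q)"
  shows "meval \<phi> (fmul p q) = meval \<phi> p ** meval \<phi> q"
proof -
  have "meval \<phi> (fmul p q) = (\<Sum>u\<in>fsupp p. meval \<phi> (fsmult (p u) (fmul (fmono u) q)))"
    unfolding fmul_as_sum[OF p] using p q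
    by (intro meval_sum) (simp_all add: finite_fsupp_fsmult finite_fsupp_fmul)
  also have "\<dots> = (\<Sum>u\<in>fsupp p. msmult (p u) (mword \<phi> u ** meval \<phi> q))"
    by (simp add: meval_fsmult finite_fsupp_fmul q meval_fmul_fmono)
  also have "\<dots> = meval \<phi> p ** meval \<phi> q"
    by (simp add: matrix_mul_sum_left meval_def)
  finally show ?thesis .
qed

lemma finite_fsupp_fword_subst:
  "(\<And>x. x \<in> set w \<Longrightarrow> finite (fsupp (\<sigma> x))) \<Longrightarrow>
   finite (fsupp (fword_subst \<sigma> w :: ('a,'f::comm_ring_1) fpoly))"
  by (induction w) (auto intro: finite_fsupp_fmul)

lemma meval_fword_subst:
  fixes \<phi> :: "('a \<times> nat) \<Rightarrow> 'f::comm_ring_1^'n::finite^'n"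
  shows "(\<And>x. x \<in> set w \<Longrightarrow> finite (fsupp (\<sigma> x))) \<Longrightarrow>
    meval \<phi> (fword_subst \<sigma> w) = mword (\<lambda>x. meval \<phi> (\<sigma> x)) w"
  by (induction w) (simp_all add: meval_fmono meval_fmul finite_fsupp_fword_subst)

lemma meval_fsubst:
  fixes \<phi> :: "('a \<times> nat) \<Rightarrow> 'f::comm_ring_1^'n::finite^'n"
  assumes p: "finite (fsupp p)"
    and \<sigma>: "\<And>w x. w \<in> fsupp p \<Longrightarrow> x \<in> set w \<Longrightarrow> finite (fsupp (\<sigma> x))"
  shows "meval \<phi> (fsubst \<sigma> p) = meval (\<lambda>x. meval \<phi> (\<sigma> x)) p"
proof -
  have "meval \<phi> (fsubst \<sigma> p) = (\<Sum>w\<in>fsupp p. meval \<phi> (fsmult (p w) (fword_subst \<sigma> w)))"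
    unfolding fsubst_as_sum using p \<sigma>
    by (intro meval_sum) (auto intro!: finite_fsupp_fsmult finite_fsupp_fword_subst)
  also have "\<dots> = (\<Sum>w\<in>fsupp p. msmult (p w) (mword (\<lambda>x. meval \<phi> (\<sigma> x)) w))"
    using \<sigma> by (intro sum.cong) (simp_all add: meval_fsmult finite_fsupp_fword_subst meval_fword_subst)
  also have "\<dots> = meval (\<lambda>x. meval \<phi> (\<sigma> x)) p"
    by (simp add: meval_def)
  finally show ?thesis .
qed

section \<open>Homogeneous components and graded identities\<close>

lemma elem_comp_zero: "0 \<in> elem_comp G gs h"
  by (simp add: elem_comp_def)

lemma elem_comp_add:
  fixes A B :: "'f::monoid_add^'n^'n"
  shows "A \<in> elem_comp G gs h \<Longrightarrow> B \<in> elem_comp G gs h \<Longrightarrow> A + B \<in> elem_comp G gs h"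
  unfolding elem_comp_def
proof (intro CollectI allI impI)
  fix i j
  assume "A \<in> {A. \<forall>i j. A $ i $ j \<noteq> 0 \<longrightarrow> inv\<^bsub>G\<^esub> gs i \<otimes>\<^bsub>G\<^esub> gs j = h}"
    "B \<in> {A. \<forall>i j. A $ i $ j \<noteq> 0 \<longrightarrow> inv\<^bsub>G\<^esub> gs i \<otimes>\<^bsub>G\<^esub> gs j = h}" "(A + B) $ i $ j \<noteq> 0"
  then show "inv\<^bsub>G\<^esub> gs i \<otimes>\<^bsub>G\<^esub> gs j = h" by (cases "A $ i $ j = 0") auto
qed

lemma elem_comp_msmult:
  fixes A :: "'f::mult_zero^'n^'n"
  shows "A \<in> elem_comp G gs h \<Longrightarrow> msmult c A \<in> elem_comp G gs h"
  unfolding elem_comp_def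
proof (intro CollectI allI impI)
  fix i j
  assume "A \<in> {A. \<forall>i j. A $ i $ j \<noteq> 0 \<longrightarrow> inv\<^bsub>G\<^esub> gs i \<otimes>\<^bsub>G\<^esub> gs j = h}" "msmult c A $ i $ j \<noteq> 0"
  then show "inv\<^bsub>G\<^esub> gs i \<otimes>\<^bsub>G\<^esub> gs j = h" by (cases "A $ i $ j = 0") auto
qed

lemma elem_comp_sum:
  fixes f :: "'b \<Rightarrow> 'f::comm_monoid_add^'n^'n"
  shows "finite S \<Longrightarrow> (\<And>x. x \<in> S \<Longrightarrow> f x \<in> elem_comp G gs h) \<Longrightarrow> (\<Sum>x\<in>S. f x) \<in> elem_comp G gs h"
  by (induction S rule: finite_induct) (auto intro: elem_comp_zero elem_comp_add)

locale elementary_grading = word_group G for G :: "'a monoid" (structure) +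
  fixes gs :: "'n::finite \<Rightarrow> 'a"
  assumes gs_closed: "gs i \<in> carrier G"
begin

lemma elem_comp_mult:
  fixes A B :: "'f::comm_ring_1^'n^'n"
  assumes A: "A \<in> elem_comp G gs g" and B: "B \<in> elem_comp G gs h"
  shows "A ** B \<in> elem_comp G gs (g \<otimes> h)"
  unfolding elem_comp_def
proof (intro CollectI allI impI)
  fix i j assume "(A ** B) $ i $ j \<noteq> 0"
  then obtain k where "A $ i $ k * B $ k $ j \<noteq> 0"
    using sum.not_neutral_contains_not_neutral by (fastforce simp: matrix_matrix_mult_def)
  then have "A $ i $ k \<noteq> 0" "B $ k $ j \<noteq> 0" by auto
  then have "inv (gs i) \<otimes> gs k = g" "inv (gs k) \<otimes> gs j = h"
    using A B by (auto simp: elem_comp_def)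
  then show "inv (gs i) \<otimes> gs j = g \<otimes> h" using gs_closed by (auto simp: m_assoc)
qed

lemma mat_one_in_elem_comp: "(mat 1 :: 'f::comm_ring_1^'n^'n) \<in> elem_comp G gs \<one>"
  by (auto simp: elem_comp_def mat_def gs_closed)

lemma mword_in_elem_comp:
  fixes \<phi> :: "('a \<times> nat) \<Rightarrow> 'f::comm_ring_1^'n^'n"
  assumes \<phi>: "graded_assign G gs \<phi>"
  shows "gword G w \<Longrightarrow> mword \<phi> w \<in> elem_comp G gs (wdeg G w)"
proof (induction w)
  case Nil
  then show ?case using mat_one_in_elem_comp by simp
next
  case (Cons x w)
  then have "\<phi> x \<in> elem_comp G gs (fst x)"
    using \<phi> unfolding graded_assign_def by (cases x) auto
  then show ?case using Cons elem_comp_mult by simp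
qed

lemma meval_in_elem_comp:
  fixes \<phi> :: "('a \<times> nat) \<Rightarrow> 'f::comm_ring_1^'n^'n"
  assumes \<phi>: "graded_assign G gs \<phi>" and p: "p \<in> free_alg G" and h: "homogeneous G g p"
  shows "meval \<phi> p \<in> elem_comp G gs g"
  unfolding meval_def
proof (rule elem_comp_sum)
  show "finite (fsupp p)" using p by (simp add: free_alg_iff)
  fix w assume "w \<in> fsupp p"
  then have "gword G w" "wdeg G w = g" using p h by (auto simp: free_alg_iff homogeneous_def)
  then show "msmult (p w) (mword \<phi> w) \<in> elem_comp G gs g"
    using mword_in_elem_comp[OF \<phi>] elem_comp_msmult by metis
qed

lemma prod_span_subset_elem_comp:
  "prod_span (elem_comp G gs g) (elem_comp G gs h) \<subseteq> (elem_comp G gs (g \<otimes> h) :: ('f::comm_ring_1^'n^'n) set)"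
  unfolding prod_span_def by (auto intro!: elem_comp_sum elem_comp_msmult elem_comp_mult)

lemma graded_identity_fadd:
  assumes p: "graded_identity G gs p" and q: "graded_identity G gs q"
  shows "graded_identity G gs (fadd p q)"
proof -
  have "p \<in> free_alg G" "q \<in> free_alg G" using p q by (simp_all add: graded_identity_def)
  then have "finite (fsupp p)" "finite (fsupp q)" by (simp_all add: free_alg_finite)
  with p q \<open>p \<in> free_alg G\<close> \<open>q \<in> free_alg G\<close> show ?thesis
    by (simp add: graded_identity_def free_alg_fadd meval_fadd)
qed

lemma graded_identity_fsmult:
  assumes p: "graded_identity G gs p"
  shows "graded_identity G gs (fsmult c p)"
proof -
  have "p \<in> free_alg G" using p by (simp add: graded_identity_def)
  then have "finite (fsupp p)" by (simp add: free_alg_finite)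
  with p \<open>p \<in> free_alg G\<close> show ?thesis
    by (simp add: graded_identity_def free_alg_fsmult meval_fsmult msmult_zero_right)
qed

lemma graded_identity_fmul:
  assumes q: "q \<in> free_alg G" and p: "graded_identity G gs p"
  shows "graded_identity G gs (fmul q p)" "graded_identity G gs (fmul p q)"
proof -
  have "p \<in> free_alg G" using p by (simp add: graded_identity_def)
  then have "finite (fsupp p)" "finite (fsupp q)" using q by (simp_all add: free_alg_finite)
  with p q \<open>p \<in> free_alg G\<close> show "graded_identity G gs (fmul q p)" "graded_identity G gs (fmul p q)"
    by (simp_all add: graded_identity_def free_alg_fmul meval_fmul)
qed

text \<open>Evaluating after a graded substitution is evaluating at another graded assignment.\<close>

lemma graded_identity_fsubst:
  assumes \<sigma>: "graded_endo G \<sigma>" and p: "graded_identity G gs (p :: ('a,'f::comm_ring_1) fpoly)"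
  shows "graded_identity G gs (fsubst \<sigma> p)"
  unfolding graded_identity_def
proof (intro conjI allI impI)
  have p_free: "p \<in> free_alg G" using p by (simp add: graded_identity_def)
  have \<sigma>_free: "\<sigma> x \<in> free_alg G" if "fst x \<in> carrier G" for x
    using \<sigma> that unfolding graded_endo_def by (cases x) auto
  show "fsubst \<sigma> p \<in> free_alg G" by (rule free_alg_fsubst[OF p_free \<sigma>_free])
  fix \<phi> :: "('a \<times> nat) \<Rightarrow> 'f^'n^'n" assume \<phi>: "graded_assign G gs \<phi>"
  have "fst x \<in> carrier G" if "w \<in> fsupp p" "x \<in> set w" for w x
    using p_free that by (force simp: free_alg_iff gword_def)
  then have "meval \<phi> (fsubst \<sigma> p) = meval (\<lambda>x. meval \<phi> (\<sigma> x)) p"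
    using p_free \<sigma>_free by (intro meval_fsubst) (blast intro: free_alg_finite)+
  moreover have "graded_assign G gs (\<lambda>x. meval \<phi> (\<sigma> x))"
    using \<sigma> by (auto simp: graded_assign_def graded_endo_def intro: meval_in_elem_comp[OF \<phi>])
  ultimately show "meval \<phi> (fsubst \<sigma> p) = 0" using p by (simp add: graded_identity_def)
qed

lemma TG_ideal_gen_graded_identity:
  assumes "\<And>s. s \<in> S \<Longrightarrow> graded_identity G gs (s :: ('a,'f::comm_ring_1) fpoly)"
  shows "p \<in> TG_ideal_gen G S \<Longrightarrow> graded_identity G gs p"
proof (induction rule: TG_ideal_gen.induct)
  case zero
  then show ?case by (simp add: graded_identity_def free_alg_zero meval_zero)
qed (simp_all add: assms graded_identity_fadd graded_identity_fsmult graded_identity_fmul graded_identity_fsubst)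

end

section \<open>Independence of monomial functions\<close>

lemma poly_eq_0_if_infinite_field:
  fixes Q :: "'f::field poly"
  assumes "infinite (UNIV :: 'f set)" and "\<And>y. poly Q y = 0"
  shows "Q = 0"
  using assms poly_roots_finite[of Q] by auto

lemma prod_mset_fun_upd:
  "prod_mset (image_mset (t(x := y)) m) =
     y ^ count m x * prod_mset (image_mset t (filter_mset (\<lambda>z. z \<noteq> x) m))"
proof -
  have m: "m = filter_mset (\<lambda>z. z \<noteq> x) m + replicate_mset (count m x) x"
    by (rule multiset_eqI) (auto simp: count_filter_mset)
  have "image_mset (t(x := y)) (filter_mset (\<lambda>z. z \<noteq> x) m) = image_mset t (filter_mset (\<lambda>z. z \<noteq> x) m)"
    by (intro image_mset_cong) auto
  then show ?thesis
    by (subst m) (simp add: mult.commute del: filter_mset_eq_conv)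
qed

text \<open>Viewing a vanishing polynomial function as a polynomial in the single variable \<open>x\<close>, each
  of its coefficients vanishes.\<close>

lemma vanishing_by_degree:
  fixes c :: "'x multiset \<Rightarrow> 'f::field"
  assumes inf: "infinite (UNIV :: 'f set)" and K: "finite K"
    and vanish: "\<And>t. (\<Sum>m\<in>K. c m * prod_mset (image_mset t m)) = 0"
  shows "(\<Sum>m\<in>{m\<in>K. count m x = k}. c m * prod_mset (image_mset t (filter_mset (\<lambda>z. z \<noteq> x) m))) = 0"
proof -
  define R where "R m = prod_mset (image_mset t (filter_mset (\<lambda>z. z \<noteq> x) m))" for m
  define Q where "Q = (\<Sum>m\<in>K. monom (c m * R m) (count m x))"
  have "poly Q y = (\<Sum>m\<in>K. c m * prod_mset (image_mset (t(x := y)) m))" for y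
    by (simp add: Q_def poly_sum poly_monom prod_mset_fun_upd R_def mult_ac)
  then have "Q = 0" using vanish by (intro poly_eq_0_if_infinite_field[OF inf]) simp
  then have "coeff Q k = 0" by simp
  moreover have "coeff Q k = (\<Sum>m\<in>K. if count m x = k then c m * R m else 0)"
    unfolding Q_def coeff_sum by (simp add: eq_commute)
  ultimately show ?thesis unfolding R_def by (simp add: sum.inter_filter[OF K])
qed

lemma monomial_functions_independent_on:
  fixes c :: "'x multiset \<Rightarrow> 'f::field"
  assumes inf: "infinite (UNIV :: 'f set)" and "finite V" "finite K" "\<forall>m\<in>K. set_mset m \<subseteq> V"
    and "\<forall>t. (\<Sum>m\<in>K. c m * prod_mset (image_mset t m)) = 0"
  shows "\<forall>m\<in>K. c m = 0"
  using assms(2-)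
proof (induction V arbitrary: K c rule: finite_induct)
  case empty
  then have "K = {} \<or> K = {{#}}" by auto
  then show ?case using empty.prems(3) by auto
next
  case (insert x V)
  let ?rest = "\<lambda>m. filter_mset (\<lambda>z. z \<noteq> x) m"
  have decomp: "m = ?rest m + replicate_mset (count m x) x" for m :: "'x multiset"
    by (rule multiset_eqI) (auto simp: count_filter_mset)
  have rest_inj: "inj_on ?rest {m\<in>K. count m x = k}" for k
    by (rule inj_onI) (metis (mono_tags, lifting) decomp mem_Collect_eq)
  have IH: "\<forall>m'\<in>?rest ` {m\<in>K. count m x = k}. c (m' + replicate_mset k x) = 0" for k
  proof (rule insert.IH)
    show "finite (?rest ` {m\<in>K. count m x = k})" using insert.prems(1) by simp
    show "\<forall>m\<in>?rest ` {m\<in>K. count m x = k}. set_mset m \<subseteq> V" using insert.prems(2) by auto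
    have "(\<Sum>m'\<in>?rest ` {m\<in>K. count m x = k}. c (m' + replicate_mset k x) * prod_mset (image_mset t m'))
        = (\<Sum>m\<in>{m\<in>K. count m x = k}. c m * prod_mset (image_mset t (?rest m)))" for t
      by (subst sum.reindex[OF rest_inj]) (auto intro!: sum.cong simp flip: decomp)
    then show "\<forall>t. (\<Sum>m'\<in>?rest ` {m\<in>K. count m x = k}. c (m' + replicate_mset k x) *
        prod_mset (image_mset t m')) = 0"
      using vanishing_by_degree[OF inf insert.prems(1)] insert.prems(3) by simp
  qed
  show ?case
  proof
    fix m assume "m \<in> K"
    then have "c (?rest m + replicate_mset (count m x) x) = 0" using IH by blast
    then show "c m = 0" using decomp[of m] by simp
  qed
qed

lemma monomial_functions_independent:
  fixes c :: "'x multiset \<Rightarrow> 'f::field"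
  assumes "infinite (UNIV :: 'f set)" and "finite K"
    and "\<And>t. (\<Sum>m\<in>K. c m * prod_mset (image_mset t m)) = 0"
  shows "\<forall>m\<in>K. c m = 0"
  using assms by (intro monomial_functions_independent_on[where V = "\<Union>m\<in>K. set_mset m"]) auto

section \<open>The degrees \<open>g\<^sub>i\<close> enumerate \<open>G\<close> bijectively\<close>

fun path_letters :: "'a monoid \<Rightarrow> 'a \<Rightarrow> 'a list \<Rightarrow> 'a list" where
  "path_letters G a [] = []"
| "path_letters G a (b # bs) = (inv\<^bsub>G\<^esub> a \<otimes>\<^bsub>G\<^esub> b) # path_letters G b bs"

lemma length_path_letters [simp]: "length (path_letters G a bs) = length bs"
  by (induction bs arbitrary: a) auto

lemma (in word_group) path_letters_closed:
  "a \<in> carrier G \<Longrightarrow> set bs \<subseteq> carrier G \<Longrightarrow> set (path_letters G a bs) \<subseteq> carrier G"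
  by (induction bs arbitrary: a) auto

lemma (in word_group) path_letters_visit:
  assumes "a \<in> carrier G" "set bs \<subseteq> carrier G" "b \<in> set bs" "length ns = length bs"
  shows "\<exists>j. a \<otimes> wdeg G (take j (zip (path_letters G a bs) ns)) = b"
  using assms
proof (induction bs arbitrary: a ns)
  case Nil
  then show ?case by simp
next
  case (Cons b' bs)
  obtain n ns' where ns: "ns = n # ns'" using Cons.prems(4) by (cases ns) auto
  show ?case
  proof (cases "b = b'")
    case True
    then show ?thesis using Cons.prems ns by (intro exI[of _ 1]) auto
  next
    case False
    then obtain j where "b' \<otimes> wdeg G (take j (zip (path_letters G b' bs) ns')) = b"
      using Cons ns by auto
    moreover have "gword G (take j (zip (path_letters G b' bs) ns'))"
      using path_letters_closed[of b' bs] Cons.prems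
      by (auto simp: gword_def dest!: in_set_takeD set_zip_leftD)
    ultimately show ?thesis
      using Cons.prems ns wdeg_closed by (intro exI[of _ "Suc j"]) (auto simp: m_assoc)
  qed
qed

definition mat_unit :: "'n::finite \<Rightarrow> 'n \<Rightarrow> 'f::zero_neq_one^'n^'n" where
  "mat_unit a b = (\<chi> r s. if r = a \<and> s = b then 1 else 0)"

lemma mat_unit_entry [simp]: "mat_unit a b $ r $ s = (if r = a \<and> s = b then 1 else 0)"
  by (simp add: mat_unit_def)

lemma mat_unit_mult:
  "mat_unit a b ** mat_unit c d = (if b = c then mat_unit a d else (0 :: 'f::semiring_1^'n::finite^'n))"
proof -
  have "(mat_unit a b ** mat_unit c d) $ r $ s =
      (\<Sum>k\<in>UNIV. (if r = a \<and> k = b then 1 else 0) * (if k = c \<and> s = d then 1 else (0::'f)))" for r s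
    by (simp add: matrix_matrix_mult_def)
  also have "\<dots> r s = (\<Sum>k\<in>UNIV. if k = b then (if r = a \<and> b = c \<and> s = d then 1 else 0) else (0::'f))" for r s
    by (rule sum.cong) auto
  finally show ?thesis by (auto simp: vec_eq_iff)
qed

context elementary_grading
begin

lemma mat_unit_in_elem_comp: "(mat_unit a b :: 'f::zero_neq_one^'n^'n) \<in> elem_comp G gs (inv (gs a) \<otimes> gs b)"
  by (auto simp: elem_comp_def)

lemma mword_nonzero_prefix_in_range:
  fixes \<phi> :: "('a \<times> nat) \<Rightarrow> 'f::comm_ring_1^'n^'n"
  assumes \<phi>: "graded_assign G gs \<phi>"
  shows "gword G w \<Longrightarrow> mword \<phi> w $ r $ c \<noteq> 0 \<Longrightarrow> gs r \<otimes> wdeg G (take j w) \<in> range gs"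
proof (induction w arbitrary: r j)
  case Nil
  then show ?case using gs_closed by simp
next
  case (Cons x xs)
  then obtain k where "\<phi> x $ r $ k * mword \<phi> xs $ k $ c \<noteq> 0"
    using sum.not_neutral_contains_not_neutral by (fastforce simp: matrix_matrix_mult_def)
  then have nz: "\<phi> x $ r $ k \<noteq> 0" "mword \<phi> xs $ k $ c \<noteq> 0" by auto
  have x: "fst x \<in> carrier G" and xs: "gword G xs" using Cons.prems by auto
  have "\<phi> x \<in> elem_comp G gs (fst x)"
    using \<phi> x unfolding graded_assign_def by (cases x) auto
  then have "inv (gs r) \<otimes> gs k = fst x" using nz(1) by (auto simp: elem_comp_def)
  then have gs_k: "gs k = gs r \<otimes> fst x" using gs_closed x by (simp add: inv_solve_left')
  show ?case
  proof (cases j)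
    case 0
    then show ?thesis using gs_closed by simp
  next
    case (Suc j')
    then show ?thesis
      using Cons.IH[OF xs nz(2), of j'] gs_k gs_closed x wdeg_closed[OF gword_take[OF xs]]
      by (simp add: m_assoc)
  qed
qed

text \<open>If some \<open>t\<close> is not of the form \<open>gs r\<close>, a word whose walk from every \<open>gs r\<close> passes through \<open>t\<close>
  is a monomial graded identity.\<close>

lemma range_gs_if_nondegenerate:
  assumes nd: "nondegenerate G gs TYPE('f::comm_ring_1)"
  shows "range gs = carrier G"
proof (rule ccontr)
  assume "range gs \<noteq> carrier G"
  then obtain t where t: "t \<in> carrier G" "t \<notin> range gs" using gs_closed by blast
  obtain ss where ss: "set ss = range gs" using finite_list[of "range gs"] by auto
  define ts where "ts = map (\<lambda>s. inv s \<otimes> t) ss"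
  define hs where "hs = path_letters G \<one> ts"
  define w where "w = zip hs [1..<Suc (length hs)]"
  have ts: "set ts \<subseteq> carrier G" using ss gs_closed t by (auto simp: ts_def)
  then have hs: "set hs \<subseteq> carrier G" unfolding hs_def by (intro path_letters_closed) simp_all
  have "map fst w = hs" unfolding w_def by (rule map_fst_zip) (simp only: length_upt diff_Suc_1)
  then have w: "gword G w" using hs unfolding gword_def by (metis list.set_map)
  have len: "length [1..<Suc (length hs)] = length ts"
    by (simp only: length_upt diff_Suc_1 hs_def length_path_letters)
  have "graded_identity G gs (fmono w :: ('a,'f) fpoly)"
    unfolding graded_identity_def
  proof (intro conjI allI impI)
    show "fmono w \<in> free_alg G" by (rule fmono_in_free_alg[OF w])
    fix \<phi> :: "('a \<times> nat) \<Rightarrow> 'f^'n^'n"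
    assume \<phi>: "graded_assign G gs \<phi>"
    have "mword \<phi> w $ r $ c = 0" for r c
    proof (rule ccontr)
      assume nz: "mword \<phi> w $ r $ c \<noteq> 0"
      have "inv (gs r) \<otimes> t \<in> set ts" using ss by (auto simp: ts_def)
      then obtain j where "\<one> \<otimes> wdeg G (take j w) = inv (gs r) \<otimes> t"
        using path_letters_visit[OF one_closed ts _ len, folded hs_def, folded w_def] by blast
      then have "gs r \<otimes> wdeg G (take j w) = t"
        using gs_closed t wdeg_closed[OF gword_take[OF w]] by simp
      then show False using mword_nonzero_prefix_in_range[OF \<phi> w nz, of j] t by simp
    qed
    then show "meval \<phi> (fmono w) = 0" by (simp add: meval_fmono vec_eq_iff)
  qed
  then show False using nd hs unfolding nondegenerate_def w_def by blast
qed

lemma inj_gs_if_comm_e_identity: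
  assumes comm: "graded_identity G gs (comm_e G :: ('a,'f::comm_ring_1) fpoly)"
  shows "inj gs"
proof (rule injI, rule ccontr)
  fix i j assume eq: "gs i = gs j" and ne: "i \<noteq> j"
  define \<phi> where "\<phi> x = (if x = (\<one>, 1::nat) then mat_unit i i
    else if x = (\<one>, 2) then mat_unit i j else (0 :: 'f^'n^'n))" for x
  have "(mat_unit i i :: 'f^'n^'n) \<in> elem_comp G gs \<one>" "(mat_unit i j :: 'f^'n^'n) \<in> elem_comp G gs \<one>"
    using mat_unit_in_elem_comp[of i i] mat_unit_in_elem_comp[of i j] gs_closed eq by simp_all
  then have "graded_assign G gs \<phi>"
    by (auto simp: graded_assign_def \<phi>_def elem_comp_zero)
  then have "meval \<phi> (comm_e G :: ('a,'f) fpoly) = 0" using comm unfolding graded_identity_def by blast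
  moreover have "meval \<phi> (comm_e G :: ('a,'f) fpoly) = mat_unit i i ** mat_unit i j - mat_unit i j ** mat_unit i i"
    unfolding comm_e_binomial by (simp add: meval_fsub meval_fmono \<phi>_def)
  ultimately have "(mat_unit i i ** mat_unit i j - mat_unit i j ** mat_unit i i) $ i $ j = (0 :: 'f)" by simp
  then show False using ne by (simp add: mat_unit_mult)
qed

end

section \<open>Regular elementary gradings\<close>

lemma fpoly_eq_sum_binomials:
  fixes p :: "('a,'f::comm_ring_1) fpoly"
  assumes fin: "finite (fsupp p)"
    and class_sums: "\<And>w. w \<in> fsupp p \<Longrightarrow> (\<Sum>w'\<in>{w'\<in>fsupp p. \<kappa> w' = \<kappa> w}. p w') = 0"
  shows "p = (\<lambda>u. \<Sum>w\<in>fsupp p. fsmult (p w) (fsub (fmono w) (fmono (f (\<kappa> w)))) u)"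
proof
  fix u
  have "(\<Sum>w\<in>fsupp p. p w * fmono w u) = (\<Sum>w\<in>fsupp p. if w = u then p u else 0)"
    by (rule sum.cong) (auto simp: fmono_def)
  also have "\<dots> = p u" using fin by (simp add: fsupp_def)
  finally have diagonal: "(\<Sum>w\<in>fsupp p. p w * fmono w u) = p u" .
  have "(\<Sum>w\<in>fsupp p. p w * fmono (f (\<kappa> w)) u) =
      (\<Sum>m\<in>\<kappa> ` fsupp p. (\<Sum>w\<in>{w\<in>fsupp p. \<kappa> w = m}. p w) * fmono (f m) u)"
    by (subst sum.image_gen[OF fin]) (auto simp: sum_distrib_right intro!: sum.cong)
  also have "\<dots> = 0" using class_sums by (intro sum.neutral) auto
  finally have "(\<Sum>w\<in>fsupp p. p w * fmono (f (\<kappa> w)) u) = 0" .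
  with diagonal show "p u = (\<Sum>w\<in>fsupp p. fsmult (p w) (fsub (fmono w) (fmono (f (\<kappa> w)))) u)"
    by (simp add: fsmult_def fsub_def right_diff_distrib sum_subtractf)
qed

locale regular_grading = elementary_grading G gs for G :: "'a monoid" (structure) and gs :: "'n::finite \<Rightarrow> 'a" +
  assumes gs_bij: "bij_betw gs UNIV (carrier G)"
begin

text \<open>Row \<open>r\<close> of a matrix of degree \<open>g\<close> can only be nonzero in column \<open>col r g\<close>.\<close>

definition col :: "'n \<Rightarrow> 'a \<Rightarrow> 'n" where
  "col r g = inv_into UNIV gs (gs r \<otimes> g)"

lemma gs_col: "g \<in> carrier G \<Longrightarrow> gs (col r g) = gs r \<otimes> g"
  unfolding col_def using gs_bij gs_closed by (intro f_inv_into_f) (auto simp: bij_betw_def)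

lemma col_unique: "g \<in> carrier G \<Longrightarrow> gs j = gs r \<otimes> g \<Longrightarrow> j = col r g"
  unfolding col_def using gs_bij by (metis bij_betw_def inv_into_f_f UNIV_I)

lemma col_one: "col r \<one> = r"
  using col_unique[of \<one> r r] gs_closed by simp

lemma col_col: "g \<in> carrier G \<Longrightarrow> h \<in> carrier G \<Longrightarrow> col (col r g) h = col r (g \<otimes> h)"
  using gs_col gs_closed by (intro col_unique[symmetric]) (simp_all add: m_assoc)

lemma elem_comp_entry_eq_0:
  assumes X: "X \<in> elem_comp G gs g" and g: "g \<in> carrier G" and j: "j \<noteq> col r g"
  shows "X $ r $ j = 0"
proof (rule ccontr)
  assume "X $ r $ j \<noteq> 0"
  then have "inv (gs r) \<otimes> gs j = g" using X by (auto simp: elem_comp_def)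
  then have "gs j = gs r \<otimes> g" using gs_closed g by (simp add: inv_solve_left')
  then show False using col_unique[OF g] j by blast
qed

lemma elem_comp_mult_entry:
  fixes X Y :: "'f::comm_ring_1^'n^'n"
  assumes "X \<in> elem_comp G gs g" "g \<in> carrier G"
  shows "(X ** Y) $ r $ c = X $ r $ col r g * Y $ col r g $ c"
proof -
  have "(X ** Y) $ r $ c = (\<Sum>k\<in>UNIV. X $ r $ k * Y $ k $ c)"
    by (simp add: matrix_matrix_mult_def)
  also have "\<dots> = (\<Sum>k\<in>UNIV. if k = col r g then X $ r $ col r g * Y $ col r g $ c else 0)"
    by (rule sum.cong) (auto simp: elem_comp_entry_eq_0[OF assms])
  finally show ?thesis by simp
qed

lemma elem_comp_nontrivial:
  assumes g: "g \<in> carrier G"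
  shows "elem_comp G gs g \<noteq> ({0} :: ('f::zero_neq_one^'n^'n) set)"
proof
  fix r :: 'n
  assume "elem_comp G gs g = ({0} :: ('f^'n^'n) set)"
  moreover have "(mat_unit r (col r g) :: 'f^'n^'n) \<in> elem_comp G gs g"
    using mat_unit_in_elem_comp[of r "col r g"] gs_col g gs_closed by simp
  ultimately have "(mat_unit r (col r g) :: 'f^'n^'n) $ r $ col r g = 0" by simp
  then show False by simp
qed

text \<open>The entries of \<open>A B C\<close> and \<open>C B A\<close> are built from the same three entries along the
  unique path \<open>r \<rightarrow> col r g \<rightarrow> r \<rightarrow> col r g\<close>.\<close>

lemma graded_identity_gen_g:
  assumes g: "g \<in> carrier G"
  shows "graded_identity G gs (gen_g G g :: ('a,'f::comm_ring_1) fpoly)"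
  unfolding graded_identity_def
proof (intro conjI allI impI)
  show "gen_g G g \<in> free_alg G" unfolding gen_g_binomial using g by (intro free_alg_fsub_fmono) auto
  fix \<phi> :: "('a \<times> nat) \<Rightarrow> 'f^'n^'n" assume \<phi>: "graded_assign G gs \<phi>"
  define A B C where "A = \<phi> (g, 1)" and "B = \<phi> (inv g, 2)" and "C = \<phi> (g, 3)"
  have A: "A \<in> elem_comp G gs g" and B: "B \<in> elem_comp G gs (inv g)" and C: "C \<in> elem_comp G gs g"
    using \<phi> g unfolding graded_assign_def A_def B_def C_def by auto
  have "(A ** (B ** C)) $ r $ c = (C ** (B ** A)) $ r $ c" for r c
  proof -
    define j where "j = col r g"
    have j_back: "col j (inv g) = r" using g by (simp add: j_def col_col col_one)
    have ABC: "(A ** (B ** C)) $ r $ c = A $ r $ j * (B $ j $ r * C $ r $ c)"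
      and CBA: "(C ** (B ** A)) $ r $ c = C $ r $ j * (B $ j $ r * A $ r $ c)"
      using elem_comp_mult_entry[OF A g] elem_comp_mult_entry[OF C g]
        elem_comp_mult_entry[OF B inv_closed[OF g]] j_back j_def by simp_all
    show ?thesis
    proof (cases "c = j")
      case False
      then have "A $ r $ c = 0" "C $ r $ c = 0"
        using elem_comp_entry_eq_0[OF A g] elem_comp_entry_eq_0[OF C g] j_def by auto
      then show ?thesis using ABC CBA by simp
    qed (use ABC CBA in \<open>simp add: mult_ac\<close>)
  qed
  then have "A ** (B ** C) - C ** (B ** A) = 0" by (simp add: vec_eq_iff)
  then show "meval \<phi> (gen_g G g :: ('a,'f) fpoly) = 0"
    unfolding gen_g_binomial by (simp add: meval_fsub meval_fmono A_def B_def C_def)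
qed

lemma elem_comp_row_decomposition:
  assumes X: "X \<in> elem_comp G gs g" and g: "g \<in> carrier G"
  shows "X = (\<Sum>r\<in>UNIV. msmult (X $ r $ col r g) (mat_unit r (col r g) :: 'f::comm_ring_1^'n^'n))"
proof -
  have "(\<Sum>r\<in>UNIV. msmult (X $ r $ col r g) (mat_unit r (col r g))) $ i $ j =
      (\<Sum>r\<in>UNIV. if r = i then X $ i $ col i g * (if j = col i g then 1 else 0) else 0)" for i j
    unfolding sum_component msmult_entry mat_unit_entry by (rule sum.cong) auto
  then show ?thesis using elem_comp_entry_eq_0[OF X g] by (auto simp: vec_eq_iff)
qed

text \<open>Each unit \<open>e\<^sub>r\<^sub>c\<close> of degree \<open>g h\<close> factors as \<open>e\<^sub>r\<^sub>k e\<^sub>k\<^sub>c\<close> with \<open>k = col r g\<close>.\<close>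

lemma elem_comp_subset_prod_span:
  assumes g: "g \<in> carrier G" and h: "h \<in> carrier G"
  shows "(elem_comp G gs (g \<otimes> h) :: ('f::comm_ring_1^'n^'n) set) \<subseteq>
    prod_span (elem_comp G gs g) (elem_comp G gs h)"
proof
  fix X :: "'f^'n^'n" assume X: "X \<in> elem_comp G gs (g \<otimes> h)"
  have gh: "g \<otimes> h \<in> carrier G" using g h by simp
  obtain e where e: "bij_betw e {..<CARD('n)} (UNIV :: 'n set)"
    using ex_bij_betw_nat_finite[of "UNIV :: 'n set"] by (auto simp: atLeast0LessThan)
  define c where "c k = X $ e k $ col (e k) (g \<otimes> h)" for k
  define A where "A k = (mat_unit (e k) (col (e k) g) :: 'f^'n^'n)" for k
  define B where "B k = (mat_unit (col (e k) g) (col (e k) (g \<otimes> h)) :: 'f^'n^'n)" for k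
  have factors: "A k \<in> elem_comp G gs g" "B k \<in> elem_comp G gs h" for k
    using mat_unit_in_elem_comp[of "e k" "col (e k) g"]
      mat_unit_in_elem_comp[of "col (e k) g" "col (e k) (g \<otimes> h)"] gs_col[OF g] gs_col[OF gh]
      gs_closed g h by (simp_all add: A_def B_def inv_mult_group m_assoc)
  have "X = (\<Sum>r\<in>UNIV. msmult (X $ r $ col r (g \<otimes> h)) (mat_unit r (col r (g \<otimes> h))))"
    by (rule elem_comp_row_decomposition[OF X gh])
  also have "\<dots> = (\<Sum>k<CARD('n). msmult (X $ e k $ col (e k) (g \<otimes> h)) (mat_unit (e k) (col (e k) (g \<otimes> h))))"
    by (rule sum.reindex_bij_betw[OF e, symmetric])
  also have "\<dots> = (\<Sum>k<CARD('n). msmult (c k) (A k ** B k))"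
    by (simp add: A_def B_def c_def mat_unit_mult)
  finally show "X \<in> prod_span (elem_comp G gs g) (elem_comp G gs h)"
    unfolding prod_span_def using factors by blast
qed

lemma strong_grading: "strong_grading G gs TYPE('f::comm_ring_1)"
  unfolding strong_grading_def
proof (intro ballI equalityI)
  fix g h assume "g \<in> carrier G" "h \<in> carrier G"
  then show "(elem_comp G gs (g \<otimes> h) :: ('f^'n^'n) set) \<subseteq> prod_span (elem_comp G gs g) (elem_comp G gs h)"
    by (rule elem_comp_subset_prod_span)
qed (rule prod_span_subset_elem_comp)

lemma card_carrier: "card (carrier G) = CARD('n)"
  using bij_betw_same_card[OF gs_bij] by simp


text \<open>The generic graded assignment: one independent variable \<open>t (x, gs r)\<close> for each letter \<open>x\<close>
  and each row \<open>r\<close>, placed in the only admissible column.\<close>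

definition generic_assign :: "(('a \<times> nat) \<times> 'a \<Rightarrow> 'f::comm_ring_1) \<Rightarrow> ('a \<times> nat) \<Rightarrow> 'f^'n^'n" where
  "generic_assign t x = (\<chi> r k. if k = col r (fst x) then t (x, gs r) else 0)"

lemma generic_assign_in_elem_comp: "g \<in> carrier G \<Longrightarrow> generic_assign t (g, i) \<in> elem_comp G gs g"
  by (auto simp: elem_comp_def generic_assign_def gs_col gs_closed)

lemma graded_assign_generic: "graded_assign G gs (generic_assign t)"
  unfolding graded_assign_def using generic_assign_in_elem_comp by blast

lemma mword_generic_assign:
  "gword G w \<Longrightarrow> mword (generic_assign t) w $ r $ c =
     (if c = col r (wdeg G w) then prod_mset (image_mset t (walk_mset G (gs r) w)) else 0)"
proof (induction w arbitrary: r)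
  case Nil
  then show ?case by (simp add: mat_def col_one eq_commute)
next
  case (Cons x xs)
  have x: "fst x \<in> carrier G" and xs: "gword G xs" using Cons.prems by auto
  define k where "k = col r (fst x)"
  have "mword (generic_assign t) (x # xs) $ r $ c = generic_assign t x $ r $ k * mword (generic_assign t) xs $ k $ c"
    using elem_comp_mult_entry[OF generic_assign_in_elem_comp[OF x, of t "snd x"] x] by (simp add: k_def)
  also have "\<dots> = t (x, gs r) *
      (if c = col k (wdeg G xs) then prod_mset (image_mset t (walk_mset G (gs k) xs)) else 0)"
    unfolding Cons.IH[OF xs] by (simp add: k_def generic_assign_def)
  finally show ?case using col_col[OF x wdeg_closed[OF xs]] gs_col[OF x] by (simp add: k_def)
qed

text \<open>Row \<open>gs\<^sup>-\<^sup>1 \<one>\<close> of the generic evaluation of \<open>p\<close> sums to the polynomial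
  \<open>\<Sum>\<^sub>w p w \<cdot> t\<^bsup>walk_mset G \<one> w\<^esup>\<close>; if it vanishes identically, the coefficient sums over the
  classes of words with equal walks vanish.\<close>

lemma graded_identity_class_sums:
  fixes p :: "('a,'f::field) fpoly"
  assumes inf: "infinite (UNIV :: 'f set)" and p: "graded_identity G gs p"
    and w: "w \<in> fsupp p"
  shows "(\<Sum>w'\<in>{w'\<in>fsupp p. walk_mset G \<one> w' = walk_mset G \<one> w}. p w') = 0"
proof -
  have fin: "finite (fsupp p)" and words: "\<And>w. w \<in> fsupp p \<Longrightarrow> gword G w"
    using p by (auto simp: graded_identity_def free_alg_iff)
  define r0 where "r0 = inv_into UNIV gs \<one>"
  have r0: "gs r0 = \<one>" unfolding r0_def using gs_bij by (intro f_inv_into_f) (auto simp: bij_betw_def)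
  let ?mon = "\<lambda>t m. prod_mset (image_mset t m)"
  have "(\<Sum>w\<in>fsupp p. p w * ?mon t (walk_mset G \<one> w)) = 0" for t
  proof -
    have "meval (generic_assign t) p = 0"
      using p graded_assign_generic unfolding graded_identity_def by blast
    then have "0 = (\<Sum>c\<in>UNIV. meval (generic_assign t) p $ r0 $ c)" by simp
    also have "\<dots> = (\<Sum>c\<in>UNIV. \<Sum>w\<in>fsupp p. p w * mword (generic_assign t) w $ r0 $ c)"
      by (simp add: meval_entry[OF fin])
    also have "\<dots> = (\<Sum>w\<in>fsupp p. \<Sum>c\<in>UNIV. p w * mword (generic_assign t) w $ r0 $ c)"
      by (rule sum.swap)
    also have "\<dots> = (\<Sum>w\<in>fsupp p. p w * ?mon t (walk_mset G \<one> w))"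
      by (intro sum.cong) (simp_all add: mword_generic_assign words r0 flip: sum_distrib_left)
    finally show ?thesis by simp
  qed
  moreover have "(\<Sum>w\<in>fsupp p. p w * ?mon t (walk_mset G \<one> w)) =
      (\<Sum>m\<in>walk_mset G \<one> ` fsupp p. (\<Sum>w\<in>{w\<in>fsupp p. walk_mset G \<one> w = m}. p w) * ?mon t m)" for t
    by (subst sum.image_gen[OF fin]) (auto simp: sum_distrib_right intro!: sum.cong)
  ultimately have "\<forall>m\<in>walk_mset G \<one> ` fsupp p. (\<Sum>w\<in>{w\<in>fsupp p. walk_mset G \<one> w = m}. p w) = 0"
    using fin by (intro monomial_functions_independent[OF inf]) simp_all
  then show ?thesis using w by blast
qed

lemma graded_identity_in_TG_ideal_gen:
  fixes p :: "('a,'f::field) fpoly"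
  assumes inf: "infinite (UNIV :: 'f set)" and p: "graded_identity G gs p"
    and comm: "comm_e G \<in> S" and gens: "\<And>g. g \<in> carrier G \<Longrightarrow> g \<noteq> \<one> \<Longrightarrow> gen_g G g \<in> S"
  shows "p \<in> TG_ideal_gen G S"
proof -
  have fin: "finite (fsupp p)" and words: "\<And>w. w \<in> fsupp p \<Longrightarrow> gword G w"
    using p by (auto simp: graded_identity_def free_alg_iff)
  define rep where "rep m = (SOME w. w \<in> fsupp p \<and> walk_mset G \<one> w = m)" for m
  have rep: "rep (walk_mset G \<one> w) \<in> fsupp p \<and> walk_mset G \<one> (rep (walk_mset G \<one> w)) = walk_mset G \<one> w"
    if "w \<in> fsupp p" for w
    unfolding rep_def by (rule someI[of _ w]) (use that in simp)
  have "p = (\<lambda>u. \<Sum>w\<in>fsupp p. fsmult (p w) (fsub (fmono w) (fmono (rep (walk_mset G \<one> w)))) u)"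
    using fin graded_identity_class_sums[OF inf p] by (rule fpoly_eq_sum_binomials)
  also have "\<dots> \<in> TG_ideal_gen G S"
  proof (intro TG_ideal_gen_sum[OF fin] TG_ideal_gen.smult)
    fix w assume "w \<in> fsupp p"
    then have "word_congruent G S w (rep (walk_mset G \<one> w))"
      using rep words by (intro word_congruent_if_walk_mset_eq[OF is_group comm gens]) auto
    then show "fsub (fmono w) (fmono (rep (walk_mset G \<one> w))) \<in> TG_ideal_gen G S"
      by (simp add: word_congruent_def)
  qed
  finally show ?thesis .
qed

end

theorem mainTheorem5:
  fixes G :: "'a monoid" and gs :: "'n::finite \<Rightarrow> 'a"
  assumes "group G" and "finite (carrier G)"
    and "infinite (UNIV :: 'f::field set)"
    and "\<forall>i. gs i \<in> carrier G"
    and "graded_identity G gs (comm_e G :: ('a,'f) fpoly)"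
    and "nondegenerate G gs TYPE('f)"
  shows "TG_ideal_gen G ({comm_e G :: ('a,'f) fpoly} \<union>
            {gen_g G g | g. g \<in> carrier G \<and> g \<noteq> \<one>\<^bsub>G\<^esub> \<and> elem_comp G gs g \<noteq> ({0} :: ('f^'n^'n) set)})
         = {p :: ('a,'f) fpoly. graded_identity G gs p}
         \<and> strong_grading G gs TYPE('f)
         \<and> card (carrier G) = CARD('n)"
proof -
  interpret elementary_grading G gs
    using assms(1,4) by (simp add: elementary_grading_def elementary_grading_axioms_def word_group_def)
  have "bij_betw gs UNIV (carrier G)"
    using inj_gs_if_comm_e_identity[OF assms(5)] range_gs_if_nondegenerate[OF assms(6)]
    by (simp add: bij_betw_def)
  then interpret regular_grading G gs by unfold_locales
  let ?S = "{comm_e G :: ('a,'f) fpoly} \<union>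
    {gen_g G g | g. g \<in> carrier G \<and> g \<noteq> \<one>\<^bsub>G\<^esub> \<and> elem_comp G gs g \<noteq> ({0} :: ('f^'n^'n) set)}"
  have "\<And>s. s \<in> ?S \<Longrightarrow> graded_identity G gs s"
    using assms(5) graded_identity_gen_g by auto
  then have "TG_ideal_gen G ?S \<subseteq> {p. graded_identity G gs p}"
    using TG_ideal_gen_graded_identity by blast
  moreover have "\<And>g. g \<in> carrier G \<Longrightarrow> g \<noteq> \<one>\<^bsub>G\<^esub> \<Longrightarrow> gen_g G g \<in> ?S"
    using elem_comp_nontrivial by blast
  then have "{p. graded_identity G gs p} \<subseteq> TG_ideal_gen G ?S"
    using graded_identity_in_TG_ideal_gen[OF assms(3), of _ ?S] by blast
  ultimately show ?thesis using strong_grading card_carrier by blast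
qed

end
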